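(* Let $n\ge2$ and $\rho\ge0$. The $n$ eigenvalues $\lambda_0(\rho),\dots,\lambda_{n-1}(\rho)$ of $K_n(\rho)$ are given by $$\lambda_k(\rho)=\frac{1-\rho^2}{1-2\rho\cos[\mu_k(\rho)]+\rho^2},\qquad k=0,1,\dots,n-1,$$ or alternatively by $$\lambda_k(\rho)=(-1)^k\frac{\sin[n\mu_k(\rho)]}{\sin[\mu_k(\rho)]},\qquad k=0,1,\dots,n-1,$$ where the parameters $\mu_k(\rho)$ are as follows ("tur" = "the unique root"): $$\mu_0(\rho)=\begin{cases} ix_0(\rho),\ x_0(\rho)\text{ tur of } c_n^{(h)}(x)=\rho \text{ in }[0,+\infty), & \rho\ge1,\\ \text{tur of } c_n^{(t)}(\mu)=\rho\text{ in }[0,\gamma_0], & 1\ge\rho\ge0;\end{cases}$$ $$\mu_1(\rho)=\begin{cases} ix_1(\rho),\ x_1(\rho)\text{ tur of } s_n^{(h)}(x)=\rho \text{ in }[0,+\infty), & \rho\ge\xi_n,\\ \text{tur of } s_n^{(t)}(\mu)=\rho\text{ in }[0,\beta_1], & \xi_n\ge\rho\ge1,\\ \text{tur of } s_n^{(t)}(\mu)=\rho\text{ in }[\beta_1,\gamma_1], & 1\ge\rho\ge0;\end{cases}$$ for even $k=2,4,\dots,2\lceil n/2\rceil-2$: $$\mu_k(\rho)=\begin{cases}\text{tur of } c_n^{(t)}(\mu)=\rho\text{ in }(\alpha_k,\beta_k], & \rho\ge1,\\ \text{tur of } c_n^{(t)}(\mu)=\rho\text{ in }[\beta_k,\gamma_k],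 & 1\ge\rho\ge0;\end{cases}$$ for odd $k=3,5,\dots,2\lfloor n/2\rfloor-1$: $$\mu_k(\rho)=\begin{cases}\text{tur of } s_n^{(t)}(\mu)=\rho\text{ in }(\alpha_k,\beta_k], & \rho\ge1,\\ \text{tur of } s_n^{(t)}(\mu)=\rho\text{ in }[\beta_k,\gamma_k], & 1\ge\rho\ge0.\end{cases}$$ (In particular each of these equations has a unique root in the indicated interval.) Finally, for $\rho>0$ with $\rho\neq1$ and $\rho\neq\xi_n$, $\lambda_k$ is a type-1 eigenvalue when $k$ is odd and a type-2 eigenvalue when $k$ is even.
   Context: $K_n(\rho)=\left[\rho^{|j-k|}\right]_{j,k=1}^n$ (with $\rho^0=1$); $\xi_n=\frac{n+1}{n-1}$. Functions: $c_n^{(t)}(\mu)=\frac{\cos\frac{\mu(n+1)}{2}}{\cos\frac{\mu(n-1)}{2}}$, $s_n^{(t)}(\mu)=\frac{\sin\frac{\mu(n+1)}{2}}{\sin\frac{\mu(n-1)}{2}}$, $c_n^{(h)}(x)=\frac{\cosh\frac{x(n+1)}{2}}{\cosh\frac{x(n-1)}{2}}$, $s_n^{(h)}(x)=\frac{\sinh\frac{x(n+1)}{2}}{\sinh\frac{x(n-1)}{2}}$, with removable singularities at $0$ filled by continuity (so $s_n^{(t)}(0)=s_n^{(h)}(0)=\xi_n$). Numbers: $\alpha_k=\frac{(k-1)\pi}{n-1}$ ($k=1,\dots,n-1$), $\beta_k=\frac{k\pi}{n}$ ($k=0,\dots,n-1$), $\gamma_k=\frac{(k+1)\pi}{n+1}$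 ($k=0,\dots,n-1$). Where an eigenvalue formula is indeterminate (e.g. $\mu_k=0$), it is understood as the limit (so $\frac{\sin n\mu}{\sin\mu}$ at $\mu=0$ equals $n$). Types: let $p_{2n}(\rho,z)=z^{2n}+(1+\rho^2)\sum_{k=1}^{n-1}z^{2k}-2\rho\sum_{k=0}^{n-1}z^{2k+1}+1$, $s_{n+1}(\rho,z)=z^{n+1}-\rho z^n+\rho z-1$, $c_{n+1}(\rho,z)=z^{n+1}-\rho z^n-\rho z+1$. For $\rho\notin\{0,\pm1,\pm\xi_n\}$ the eigenvalues of $K_n(\rho)$ are the numbers $\frac{z(1-\rho^2)}{(z-\rho)(1-\rho z)}$ with $z$ a zero of $p_{2n}(\rho,\cdot)$, and each such zero satisfies exactly one of $s_{n+1}(\rho,z)=s_{n+1}(\rho,z^{-1})=0$ (type 1) or $c_{n+1}(\rho,z)=c_{n+1}(\rho,z^{-1})=0$ (type 2); an eigenvalue has the type of the zero(s) it arises from. *)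

theory Defs
  imports Complex_Main "Jordan_Normal_Form.Char_Poly"
begin

text \<open>The Kac-Murdock-Szego matrix K_n(rho), indices 0..n-1 (entries rho^|j-k|, with 0^0 = 1).\<close>
definition KMS :: "nat \<Rightarrow> real \<Rightarrow> real mat" where
  "KMS n \<rho> = mat n n (\<lambda>(j,k). \<rho> ^ nat \<bar>int j - int k\<bar>)"

definition xi :: "nat \<Rightarrow> real" where
  "xi n = (real n + 1) / (real n - 1)"

definition ct :: "nat \<Rightarrow> real \<Rightarrow> real" where
  "ct n \<mu> = cos (\<mu> * (real n + 1) / 2) / cos (\<mu> * (real n - 1) / 2)"

definition st :: "nat \<Rightarrow> real \<Rightarrow> real" where
  "st n \<mu> = (if \<mu> = 0 then xi n
              else sin (\<mu> * (real n + 1) / 2) / sin (\<mu> * (real n - 1) / 2))"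

definition ch :: "nat \<Rightarrow> real \<Rightarrow> real" where
  "ch n x = cosh (x * (real n + 1) / 2) / cosh (x * (real n - 1) / 2)"

definition sh :: "nat \<Rightarrow> real \<Rightarrow> real" where
  "sh n x = (if x = 0 then xi n
             else sinh (x * (real n + 1) / 2) / sinh (x * (real n - 1) / 2))"

definition alpha :: "nat \<Rightarrow> nat \<Rightarrow> real" where
  "alpha n k = (real k - 1) * pi / (real n - 1)"

definition beta :: "nat \<Rightarrow> nat \<Rightarrow> real" where
  "beta n k = real k * pi / real n"

definition gamma :: "nat \<Rightarrow> nat \<Rightarrow> real" where
  "gamma n k = (real k + 1) * pi / (real n + 1)"

definition tur :: "(real \<Rightarrow> bool) \<Rightarrow> real set \<Rightarrow> real" where
  "tur P S = (THE x. x \<in> S \<and> P x)"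

text \<open>The parameters mu_k(rho), as in the statement (at boundary values of rho
  the theorem asserts that both cases give the same value).\<close>
definition mu :: "nat \<Rightarrow> real \<Rightarrow> nat \<Rightarrow> complex" where
  "mu n \<rho> k =
    (if k = 0 then
       (if \<rho> \<ge> 1 then \<i> * complex_of_real (tur (\<lambda>x. ch n x = \<rho>) {0..})
        else complex_of_real (tur (\<lambda>m. ct n m = \<rho>) {0..gamma n 0}))
     else if k = 1 then
       (if \<rho> \<ge> xi n then \<i> * complex_of_real (tur (\<lambda>x. sh n x = \<rho>) {0..})
        else if \<rho> \<ge> 1 then complex_of_real (tur (\<lambda>m. st n m = \<rho>) {0..beta n 1})
        else complex_of_real (tur (\<lambda>m. st n m = \<rho>) {beta n 1..gamma n 1}))
     else if even k then
       (if \<rho> \<ge> 1 then complex_of_real (tur (\<lambda>m. ct n m = \<rho>) {alpha n k<..beta n k})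
        else complex_of_real (tur (\<lambda>m. ct n m = \<rho>) {beta n k..gamma n k}))
     else
       (if \<rho> \<ge> 1 then complex_of_real (tur (\<lambda>m. st n m = \<rho>) {alpha n k<..beta n k})
        else complex_of_real (tur (\<lambda>m. st n m = \<rho>) {beta n k..gamma n k})))"

definition lam_formula1 :: "real \<Rightarrow> complex \<Rightarrow> complex" where
  "lam_formula1 \<rho> \<mu> = (1 - complex_of_real \<rho> ^ 2) /
       (1 - 2 * complex_of_real \<rho> * cos \<mu> + complex_of_real \<rho> ^ 2)"

definition lam_formula1_denom :: "real \<Rightarrow> complex \<Rightarrow> complex" where
  "lam_formula1_denom \<rho> \<mu> = 1 - 2 * complex_of_real \<rho> * cos \<mu> + complex_of_real \<rho> ^ 2"

definition lam_formula2 :: "nat \<Rightarrow> nat \<Rightarrow> complex \<Rightarrow> complex" where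
  "lam_formula2 n k \<mu> = (-1) ^ k *
     (if \<mu> = 0 then of_nat n else sin (of_nat n * \<mu>) / sin \<mu>)"

definition lam :: "nat \<Rightarrow> real \<Rightarrow> nat \<Rightarrow> complex" where
  "lam n \<rho> k = lam_formula2 n k (mu n \<rho> k)"

definition p2n :: "nat \<Rightarrow> real \<Rightarrow> complex \<Rightarrow> complex" where
  "p2n n \<rho> z = z ^ (2*n) + (1 + complex_of_real \<rho> ^ 2) * (\<Sum>k\<in>{1..n-1}. z ^ (2*k))
      - 2 * complex_of_real \<rho> * (\<Sum>k\<in>{0..n-1}. z ^ (2*k+1)) + 1"

definition s_pol :: "nat \<Rightarrow> real \<Rightarrow> complex \<Rightarrow> complex" where
  "s_pol n \<rho> z = z ^ (n+1) - complex_of_real \<rho> * z ^ n + complex_of_real \<rho> * z - 1"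

definition c_pol :: "nat \<Rightarrow> real \<Rightarrow> complex \<Rightarrow> complex" where
  "c_pol n \<rho> z = z ^ (n+1) - complex_of_real \<rho> * z ^ n - complex_of_real \<rho> * z + 1"

definition eig_of_zero :: "real \<Rightarrow> complex \<Rightarrow> complex" where
  "eig_of_zero \<rho> z = z * (1 - complex_of_real \<rho> ^ 2) /
     ((z - complex_of_real \<rho>) * (1 - complex_of_real \<rho> * z))"

text \<open>An eigenvalue has the type of the zero(s) of p_{2n} it arises from.\<close>
definition eig_type1 :: "nat \<Rightarrow> real \<Rightarrow> complex \<Rightarrow> bool" where
  "eig_type1 n \<rho> l \<longleftrightarrow>
     (\<exists>z. p2n n \<rho> z = 0 \<and> eig_of_zero \<rho> z = l) \<and>
     (\<forall>z. p2n n \<rho> z = 0 \<and> eig_of_zero \<rho> z = l \<longrightarrow>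
          s_pol n \<rho> z = 0 \<and> s_pol n \<rho> (inverse z) = 0)"

definition eig_type2 :: "nat \<Rightarrow> real \<Rightarrow> complex \<Rightarrow> bool" where
  "eig_type2 n \<rho> l \<longleftrightarrow>
     (\<exists>z. p2n n \<rho> z = 0 \<and> eig_of_zero \<rho> z = l) \<and>
     (\<forall>z. p2n n \<rho> z = 0 \<and> eig_of_zero \<rho> z = l \<longrightarrow>
          c_pol n \<rho> z = 0 \<and> c_pol n \<rho> (inverse z) = 0)"

end

theory Submission
  imports Defs "HOL-Analysis.Complex_Transcendental"
begin

text \<open>
  A vector \<open>w\<^sub>0, \<dots>, w\<^sub>n\<^sub>-\<^sub>1\<close> solving \<open>w\<^sub>j\<^sub>-\<^sub>1 + w\<^sub>j\<^sub>+\<^sub>1 = 2 cos \<mu> w\<^sub>j\<close> with the boundary conditions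
  \<open>w\<^sub>-\<^sub>1 = \<rho> w\<^sub>0\<close>, \<open>w\<^sub>n = \<rho> w\<^sub>n\<^sub>-\<^sub>1\<close> is an eigenvector of \<open>K\<^sub>n(\<rho>)\<close> for \<open>(1-\<rho>\<^sup>2)/(1-2\<rho> cos \<mu>+\<rho>\<^sup>2)\<close>.
  Taking \<open>w\<^sub>j = cos((j-(n-1)/2)\<mu>)\<close> or \<open>sin((j-(n-1)/2)\<mu>)\<close>, (anti)symmetric about the centre, both boundary
  conditions reduce to \<open>c\<^sub>n(\<mu>) = \<rho>\<close> resp. \<open>s\<^sub>n(\<mu>) = \<rho>\<close>. On \<open>(\<alpha>\<^sub>k, \<gamma>\<^sub>k]\<close> these secular functions are
  quotients of cosines of two half-angles in \<open>(-\<pi>/2, \<pi>/2]\<close>, and the intermediate value theorem gives a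
  root in each interval of the statement (an imaginary one, via \<open>cosh\<close>/\<open>sinh\<close>, for \<open>\<mu>\<^sub>0\<close> and \<open>\<mu>\<^sub>1\<close> when
  \<open>\<rho>\<close> is large). The intervals are disjoint and \<open>cos\<close> is injective on \<open>[0,\<pi>) \<union> i[0,\<infinity>)\<close>, so for
  \<open>\<rho> \<notin> {0,1}\<close> these roots give \<open>n\<close> distinct eigenvalues; since there are at most \<open>n\<close>, every interval
  contains exactly one root and the characteristic polynomial is \<open>\<Prod>(x - \<lambda>\<^sub>k)\<close>. At \<open>\<rho> = 0\<close> and
  \<open>\<rho> = 1\<close> the matrix is the identity and the all-ones matrix. The types come from
  \<open>(z\<^sup>2-1) p\<^sub>2\<^sub>n = s\<^sub>n\<^sub>+\<^sub>1 c\<^sub>n\<^sub>+\<^sub>1\<close>: the secular equations make \<open>e\<^sup>\<plusminus>\<^sup>i\<^sup>\<mu>\<close> are zeros of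
  \<open>s\<^sub>n\<^sub>+\<^sub>1\<close> resp. \<open>c\<^sub>n\<^sub>+\<^sub>1\<close>.
\<close>

section \<open>Eigenvectors of the KMS matrix from a three-term recurrence\<close>

lemma recurrence_sum_left:
  fixes w :: "int \<Rightarrow> 'a::idom"
  assumes rec: "\<And>j. w (j - 1) + w (j + 1) = 2 * c * w j"
    and left: "w (-1) = r * w 0"
  shows "(1 - 2*r*c + r^2) * (\<Sum>i\<le>j. r^(j-i) * w (int i)) = w (int j) - r * w (int j + 1)"
proof (induction j)
  case 0
  have "w (-1) + w 1 = 2*c*w 0" using rec[of 0] by simp
  then show ?case using left by simp (Groebner_Basis.algebra)
next
  case (Suc j)
  have split: "(\<Sum>i\<le>Suc j. r^(Suc j-i) * w (int i)) = r * (\<Sum>i\<le>j. r^(j-i) * w (int i)) + w (int j + 1)"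
    by (simp add: sum_distrib_left Suc_diff_le mult.assoc add.commute)
  have "w (int j) + w (int j + 2) = 2*c*w (int j + 1)" using rec[of "int j + 1"] by (simp add: add.assoc)
  then show ?case unfolding split using Suc.IH by (simp add: add.assoc add.commute) (Groebner_Basis.algebra)
qed

lemma recurrence_sum_right:
  fixes w :: "int \<Rightarrow> 'a::idom"
  assumes rec: "\<And>j. w (j - 1) + w (j + 1) = 2 * c * w j"
    and right: "w (int n) = r * w (int n - 1)"
    and "j < n"
  shows "(1 - 2*r*c + r^2) * (\<Sum>i\<in>{j..<n}. r^(i-j) * w (int i)) = w (int j) - r * w (int j - 1)"
proof -
  have "j \<le> n - 1" using \<open>j < n\<close> by simp
  then show ?thesis
  proof (induction j rule: inc_induct)
    case base
    have n1: "int (n - 1) = int n - 1" using \<open>j < n\<close> by simp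
    have "{n - 1..<n} = {n - 1}" using \<open>j < n\<close> by auto
    then have s: "(\<Sum>i\<in>{n - 1..<n}. r^(i-(n-1)) * w (int i)) = w (int n - 1)" using n1 by simp
    have "w (int n - 1 - 1) + w (int n) = 2 * c * w (int n - 1)" using rec[of "int n - 1"] by simp
    then show ?case unfolding s n1 using right by (Groebner_Basis.algebra)
  next
    case (step m)
    have "(\<Sum>i\<in>{m..<n}. r^(i-m) * w (int i)) = w (int m) + (\<Sum>i\<in>{Suc m..<n}. r^(i-m) * w (int i))"
      using step by (subst sum.atLeast_Suc_lessThan) auto
    also have "(\<Sum>i\<in>{Suc m..<n}. r^(i-m) * w (int i)) = r * (\<Sum>i\<in>{Suc m..<n}. r^(i - Suc m) * w (int i))"
      unfolding sum_distrib_left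
      by (rule sum.cong) (auto simp: power_Suc[symmetric] Suc_diff_Suc mult.assoc)
    finally have split: "(\<Sum>i\<in>{m..<n}. r^(i-m) * w (int i))
        = w (int m) + r * (\<Sum>i\<in>{Suc m..<n}. r^(i - Suc m) * w (int i))" .
    have "w (int m - 1) + w (int m + 1) = 2 * c * w (int m)" using rec[of "int m"] by simp
    then show ?case unfolding split using step by (simp add: add.commute) (Groebner_Basis.algebra)
  qed
qed

lemma recurrence_kms_row:
  fixes w :: "int \<Rightarrow> 'a::idom"
  assumes rec: "\<And>j. w (j - 1) + w (j + 1) = 2 * c * w j"
    and left: "w (-1) = r * w 0" and right: "w (int n) = r * w (int n - 1)"
    and j: "j < n"
  shows "(1 - 2*r*c + r^2) * (\<Sum>i<n. r^(nat \<bar>int i - int j\<bar>) * w (int i)) = (1 - r^2) * w (int j)"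
proof -
  have split: "{..<n} = {..j} \<union> {Suc j..<n}" using j by auto
  have "(\<Sum>i<n. r^(nat \<bar>int i - int j\<bar>) * w (int i))
      = (\<Sum>i\<le>j. r^(nat \<bar>int i - int j\<bar>) * w (int i)) + (\<Sum>i\<in>{Suc j..<n}. r^(nat \<bar>int i - int j\<bar>) * w (int i))"
    unfolding split by (rule sum.union_disjoint) auto
  also have "(\<Sum>i\<le>j. r^(nat \<bar>int i - int j\<bar>) * w (int i)) = (\<Sum>i\<le>j. r^(j-i) * w (int i))"
    by (intro sum.cong) (auto simp: nat_diff_distrib)
  also have "(\<Sum>i\<in>{Suc j..<n}. r^(nat \<bar>int i - int j\<bar>) * w (int i)) = (\<Sum>i\<in>{Suc j..<n}. r^(i-j) * w (int i))"
    by (intro sum.cong) (auto simp: nat_diff_distrib)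
  also have "\<dots> = (\<Sum>i\<in>{j..<n}. r^(i-j) * w (int i)) - w (int j)"
    using j by (subst (2) sum.atLeast_Suc_lessThan) auto
  finally have row: "(\<Sum>i<n. r^(nat \<bar>int i - int j\<bar>) * w (int i))
      = (\<Sum>i\<le>j. r^(j-i) * w (int i)) + ((\<Sum>i\<in>{j..<n}. r^(i-j) * w (int i)) - w (int j))" .
  show ?thesis
    unfolding row using recurrence_sum_left[OF rec left, of j] recurrence_sum_right[OF rec right j] rec[of "int j"]
    by (Groebner_Basis.algebra)
qed

lemma one_minus_of_real_square_neq_0: "\<rho>\<^sup>2 \<noteq> 1 \<Longrightarrow> 1 - (complex_of_real \<rho>)\<^sup>2 \<noteq> 0"
  by (metis of_real_1 of_real_diff of_real_eq_0_iff of_real_power right_minus_eq)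

lemma kms_eigenvalue_of_recurrence:
  fixes w :: "int \<Rightarrow> complex" and \<rho> :: real
  assumes rec: "\<And>j. w (j - 1) + w (j + 1) = 2 * c * w j"
    and left: "w (-1) = of_real \<rho> * w 0" and right: "w (int n) = of_real \<rho> * w (int n - 1)"
    and "w 0 \<noteq> 0" and "n \<ge> 1" and "\<rho>\<^sup>2 \<noteq> 1"
  shows "1 - 2 * of_real \<rho> * c + (of_real \<rho>)\<^sup>2 \<noteq> 0 \<and>
    eigenvalue (map_mat complex_of_real (KMS n \<rho>)) ((1 - (of_real \<rho>)\<^sup>2) / (1 - 2 * of_real \<rho> * c + (of_real \<rho>)\<^sup>2))"
proof -
  define r :: complex where "r = of_real \<rho>"
  define t where "t = 1 - 2*r*c + r^2"
  define v where "v = Matrix.vec n (\<lambda>i. w (int i))"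
  let ?A = "map_mat complex_of_real (KMS n \<rho>)"
  have row: "t * (\<Sum>i<n. r^(nat \<bar>int i - int j\<bar>) * w (int i)) = (1 - r^2) * w (int j)" if "j < n" for j
    unfolding t_def using recurrence_kms_row[OF rec left[folded r_def] right[folded r_def] that] .
  have r2: "1 - r^2 \<noteq> 0"
    using one_minus_of_real_square_neq_0[OF \<open>\<rho>\<^sup>2 \<noteq> 1\<close>] unfolding r_def .
  have "t \<noteq> 0"
    using row[of 0] \<open>n \<ge> 1\<close> \<open>w 0 \<noteq> 0\<close> r2 by auto
  have "v \<noteq> 0\<^sub>v n"
    using \<open>n \<ge> 1\<close> \<open>w 0 \<noteq> 0\<close> unfolding v_def by (metis index_vec index_zero_vec(1) less_one order_less_le_trans of_nat_0)
  moreover have "?A *\<^sub>v v = ((1 - r^2) / t) \<cdot>\<^sub>v v"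
  proof (rule eq_vecI)
    fix j assume "j < dim_vec (((1 - r^2) / t) \<cdot>\<^sub>v v)"
    then have j: "j < n" by (simp add: v_def)
    have "vec_index (?A *\<^sub>v v) j = (\<Sum>i<n. r^(nat \<bar>int i - int j\<bar>) * w (int i))"
      using j by (auto simp: KMS_def scalar_prod_def v_def r_def lessThan_atLeast0 abs_minus_commute intro!: sum.cong)
    also have "\<dots> = (1 - r^2) / t * w (int j)" using row[OF j] \<open>t \<noteq> 0\<close> by (simp add: field_simps)
    finally show "vec_index (?A *\<^sub>v v) j = vec_index (((1 - r^2) / t) \<cdot>\<^sub>v v) j"
      using j by (simp add: v_def)
  qed (simp add: KMS_def v_def)
  ultimately have "eigenvector ?A v ((1 - r^2) / t)"
    unfolding eigenvector_def by (simp add: KMS_def v_def)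
  then show ?thesis using \<open>t \<noteq> 0\<close> unfolding eigenvalue_def t_def r_def by blast
qed

definition trig :: "nat \<Rightarrow> 'a::{real_normed_field,banach} \<Rightarrow> 'a" where
  "trig k x = (if even k then cos x else sin x)"

lemma trig_addition: "trig k (x - y) + trig k (x + y) = 2 * cos y * trig k x"
  by (simp add: trig_def cos_add cos_diff sin_add sin_diff algebra_simps)

lemma trig_minus: "trig k (- x) = (-1) ^ k * trig k x"
  by (simp add: trig_def)

lemma trig_of_real: "trig k (of_real x) = of_real (trig k x)"
  by (simp add: trig_def cos_of_real sin_of_real)

lemma kms_eigenvalue_of_symmetric_solution:
  fixes f :: "complex \<Rightarrow> complex" and \<mu> \<sigma> :: complex
  assumes addition: "\<And>x. f (x - \<mu>) + f (x + \<mu>) = 2 * cos \<mu> * f x"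
    and symmetric: "\<And>x. f (- x) = \<sigma> * f x"
    and boundary: "f (\<mu> * (of_nat n + 1) / 2) = of_real \<rho> * f (\<mu> * (of_nat n - 1) / 2)"
    and nonzero: "f (\<mu> * (of_nat n - 1) / 2) \<noteq> 0"
    and "n \<ge> 1" "\<rho>\<^sup>2 \<noteq> 1"
  shows "lam_formula1_denom \<rho> \<mu> \<noteq> 0 \<and> eigenvalue (map_mat complex_of_real (KMS n \<rho>)) (lam_formula1 \<rho> \<mu>)"
proof -
  define w where "w = (\<lambda>j::int. f ((of_int j - (of_nat n - 1) / 2) * \<mu>))"
  have rec: "w (j - 1) + w (j + 1) = 2 * cos \<mu> * w j" for j
    using addition[of "(of_int j - (of_nat n - 1) / 2) * \<mu>"] unfolding w_def by (simp add: algebra_simps)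
  have "(of_int (-1) - (of_nat n - 1) / 2) * \<mu> = - (\<mu> * (of_nat n + 1) / 2)"
    "(of_int 0 - (of_nat n - 1) / 2) * \<mu> = - (\<mu> * (of_nat n - 1) / 2)"
    "(of_int (int n) - (of_nat n - 1) / 2) * \<mu> = \<mu> * (of_nat n + 1) / 2"
    "(of_int (int n - 1) - (of_nat n - 1) / 2) * \<mu> = \<mu> * (of_nat n - 1) / 2"
    by (simp_all add: field_simps)
  then have w_ends: "w (-1) = \<sigma> * f (\<mu> * (of_nat n + 1) / 2)" "w 0 = \<sigma> * f (\<mu> * (of_nat n - 1) / 2)"
    "w (int n) = f (\<mu> * (of_nat n + 1) / 2)" "w (int n - 1) = f (\<mu> * (of_nat n - 1) / 2)"
    unfolding w_def by (simp_all only: symmetric)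
  have "f (\<mu> * (of_nat n - 1) / 2) = \<sigma> * (\<sigma> * f (\<mu> * (of_nat n - 1) / 2))"
    using symmetric[of "\<mu> * (of_nat n - 1) / 2"] symmetric[of "- (\<mu> * (of_nat n - 1) / 2)"] by simp
  then have "\<sigma> \<noteq> 0" using nonzero by auto
  then have "w 0 \<noteq> 0" using nonzero w_ends by simp
  from kms_eigenvalue_of_recurrence[OF rec _ _ this \<open>n \<ge> 1\<close> \<open>\<rho>\<^sup>2 \<noteq> 1\<close>] show ?thesis
    using boundary w_ends unfolding lam_formula1_def lam_formula1_denom_def by simp
qed

lemma kms_eigenvalue_of_trig:
  fixes \<mu> :: complex
  assumes "trig k (\<mu> * (of_nat n + 1) / 2) = of_real \<rho> * trig k (\<mu> * (of_nat n - 1) / 2)"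
    and "trig k (\<mu> * (of_nat n - 1) / 2) \<noteq> 0" and "n \<ge> 1" and "\<rho>\<^sup>2 \<noteq> 1"
  shows "lam_formula1_denom \<rho> \<mu> \<noteq> 0 \<and> eigenvalue (map_mat complex_of_real (KMS n \<rho>)) (lam_formula1 \<rho> \<mu>)"
  using kms_eigenvalue_of_symmetric_solution[OF trig_addition trig_minus assms] .

lemma xi_gt_1: "n \<ge> 2 \<Longrightarrow> xi n > 1"
  by (simp add: xi_def field_simps)

text \<open>At \<open>\<rho> = \<xi>\<^sub>n\<close> the trigonometric solutions degenerate (\<open>\<mu> = 0\<close>) and the eigenvector
  becomes linear.\<close>
lemma kms_eigenvalue_xi:
  assumes "n \<ge> 2"
  shows "lam_formula1_denom (xi n) 0 \<noteq> 0 \<and> eigenvalue (map_mat complex_of_real (KMS n (xi n))) (lam_formula1 (xi n) 0)"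
proof -
  define w where "w = (\<lambda>j::int. 2 * of_int j - (of_nat n - 1 :: complex))"
  have rec: "w (j - 1) + w (j + 1) = 2 * 1 * w j" for j
    unfolding w_def by (simp add: algebra_simps)
  have "(of_nat n :: complex) \<noteq> of_nat 1" using assms by (simp only: of_nat_eq_iff)
  then have n1: "(of_nat n :: complex) - 1 \<noteq> 0" by simp
  have xi: "complex_of_real (xi n) = (of_nat n + 1) / (of_nat n - 1)"
    unfolding xi_def by simp
  have "w (-1) = of_real (xi n) * w 0" "w (int n) = of_real (xi n) * w (int n - 1)" "w 0 \<noteq> 0"
    unfolding w_def xi using n1 by (simp_all add: field_simps)
  moreover have "(xi n)\<^sup>2 \<noteq> 1" using xi_gt_1[OF assms] by (simp add: power2_eq_1_iff)
  ultimately show ?thesis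
    using kms_eigenvalue_of_recurrence[OF rec, of "xi n" n] assms
    unfolding lam_formula1_def lam_formula1_denom_def by simp
qed

lemma trig_boundary_identities:
  fixes \<mu> :: complex
  assumes boundary: "trig k (\<mu> * (of_nat n + 1) / 2) = of_real \<rho> * trig k (\<mu> * (of_nat n - 1) / 2)"
  shows "lam_formula1_denom \<rho> \<mu> * (trig k (\<mu> * (of_nat n - 1) / 2))\<^sup>2 = (sin \<mu>)\<^sup>2"
    and "(1 - (of_real \<rho>)\<^sup>2) * (trig k (\<mu> * (of_nat n - 1) / 2))\<^sup>2 = (-1) ^ k * sin (of_nat n * \<mu>) * sin \<mu>"
proof -
  define a where "a = \<mu> * (of_nat n + 1) / 2"
  define b where "b = \<mu> * (of_nat n - 1) / 2"
  have "\<mu> = a - b" "of_nat n * \<mu> = a + b" unfolding a_def b_def by (simp_all add: field_simps)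
  then have angles: "cos \<mu> = cos a * cos b + sin a * sin b" "sin \<mu> = sin a * cos b - cos a * sin b"
    "sin (of_nat n * \<mu>) = sin a * cos b + cos a * sin b"
    by (simp_all add: cos_diff sin_diff sin_add)
  have pyth: "(sin a)\<^sup>2 + (cos a)\<^sup>2 = 1" "(sin b)\<^sup>2 + (cos b)\<^sup>2 = 1" by simp_all
  have "lam_formula1_denom \<rho> \<mu> * (trig k b)\<^sup>2 = (sin \<mu>)\<^sup>2 \<and>
      (1 - (of_real \<rho>)\<^sup>2) * (trig k b)\<^sup>2 = (-1) ^ k * sin (of_nat n * \<mu>) * sin \<mu>"
  proof (cases "even k")
    case True
    then have "cos a = of_real \<rho> * cos b" using boundary unfolding a_def b_def trig_def by simp
    then have "(1 - 2 * of_real \<rho> * (cos a * cos b + sin a * sin b) + (of_real \<rho>)\<^sup>2) * (cos b)\<^sup>2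
          = (sin a * cos b - cos a * sin b)\<^sup>2"
        "(1 - (of_real \<rho>)\<^sup>2) * (cos b)\<^sup>2 = (sin a * cos b + cos a * sin b) * (sin a * cos b - cos a * sin b)"
      using pyth by (Groebner_Basis.algebra)+
    with True show ?thesis unfolding lam_formula1_denom_def angles trig_def by simp
  next
    case False
    then have "sin a = of_real \<rho> * sin b" using boundary unfolding a_def b_def trig_def by simp
    then have "(1 - 2 * of_real \<rho> * (cos a * cos b + sin a * sin b) + (of_real \<rho>)\<^sup>2) * (sin b)\<^sup>2
          = (sin a * cos b - cos a * sin b)\<^sup>2"
        "(1 - (of_real \<rho>)\<^sup>2) * (sin b)\<^sup>2 = (- (sin a * cos b) - cos a * sin b) * (sin a * cos b - cos a * sin b)"
      using pyth by (Groebner_Basis.algebra)+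
    with False show ?thesis unfolding lam_formula1_denom_def angles trig_def by simp
  qed
  then show "lam_formula1_denom \<rho> \<mu> * (trig k (\<mu> * (of_nat n - 1) / 2))\<^sup>2 = (sin \<mu>)\<^sup>2"
    and "(1 - (of_real \<rho>)\<^sup>2) * (trig k (\<mu> * (of_nat n - 1) / 2))\<^sup>2 = (-1) ^ k * sin (of_nat n * \<mu>) * sin \<mu>"
    unfolding b_def by auto
qed

lemma lam_formula2_eq_lam_formula1:
  fixes \<mu> :: complex
  assumes boundary: "trig k (\<mu> * (of_nat n + 1) / 2) = of_real \<rho> * trig k (\<mu> * (of_nat n - 1) / 2)"
    and nonzero: "trig k (\<mu> * (of_nat n - 1) / 2) \<noteq> 0" and "sin \<mu> \<noteq> 0"
  shows "lam_formula1_denom \<rho> \<mu> \<noteq> 0 \<and> lam_formula2 n k \<mu> = lam_formula1 \<rho> \<mu>"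
proof -
  let ?T = "(trig k (\<mu> * (of_nat n - 1) / 2))\<^sup>2"
  note identities = trig_boundary_identities[OF boundary]
  have "lam_formula1_denom \<rho> \<mu> \<noteq> 0" using identities(1) \<open>sin \<mu> \<noteq> 0\<close> by auto
  have "lam_formula1 \<rho> \<mu> = (1 - (of_real \<rho>)\<^sup>2) * ?T / (lam_formula1_denom \<rho> \<mu> * ?T)"
    using nonzero unfolding lam_formula1_def lam_formula1_denom_def by simp
  also have "\<dots> = (-1) ^ k * (sin (of_nat n * \<mu>) / sin \<mu>)"
    unfolding identities using \<open>sin \<mu> \<noteq> 0\<close> by (simp add: power2_eq_square)
  finally show ?thesis using \<open>lam_formula1_denom \<rho> \<mu> \<noteq> 0\<close> \<open>sin \<mu> \<noteq> 0\<close>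
    unfolding lam_formula2_def by auto
qed

lemma lam_formula2_eq_lam_formula1_xi:
  assumes "n \<ge> 2"
  shows "lam_formula1_denom (xi n) 0 \<noteq> 0 \<and> lam_formula2 n 1 0 = lam_formula1 (xi n) 0"
proof -
  have "xi n \<noteq> 1" using xi_gt_1[OF assms] by simp
  have "lam_formula1 (xi n) 0 = of_real ((1 - (xi n)\<^sup>2) / (1 - xi n)\<^sup>2)"
    unfolding lam_formula1_def by (simp add: power2_eq_square algebra_simps)
  also have "(1 - (xi n)\<^sup>2) / (1 - xi n)\<^sup>2 = ((1 + xi n) * (1 - xi n)) / ((1 - xi n) * (1 - xi n))"
    by (simp add: power2_eq_square algebra_simps)
  also have "\<dots> = (1 + xi n) / (1 - xi n)"
    using \<open>xi n \<noteq> 1\<close> by simp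
  also have "\<dots> = - real n"
    using assms unfolding xi_def by (simp add: field_simps)
  finally have "lam_formula1 (xi n) 0 = - of_nat n" by simp
  moreover have "lam_formula1_denom (xi n) 0 = of_real ((1 - xi n)\<^sup>2)"
    unfolding lam_formula1_denom_def by (simp add: power2_eq_square algebra_simps)
  ultimately show ?thesis using \<open>xi n \<noteq> 1\<close> unfolding lam_formula2_def by simp
qed

section \<open>The polynomials \<open>p\<^sub>2\<^sub>n\<close>, \<open>s\<^sub>n\<^sub>+\<^sub>1\<close>, \<open>c\<^sub>n\<^sub>+\<^sub>1\<close> and the types of eigenvalues\<close>

lemma p2n_factorisation:
  assumes "n \<ge> 1"
  shows "(z\<^sup>2 - 1) * p2n n \<rho> z = s_pol n \<rho> z * c_pol n \<rho> z"
proof -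
  define Z where "Z = z ^ n"
  have geometric: "(z\<^sup>2 - 1) * (\<Sum>k<n. z ^ (2*k)) = Z\<^sup>2 - 1"
    using power_diff_1_eq[of "z\<^sup>2" n] unfolding Z_def by (simp add: power_mult[symmetric] mult.commute)
  have "{..<n} = insert 0 {1..n-1}" "{0..n-1} = {..<n}" using assms by auto
  then have "(\<Sum>k<n. z ^ (2*k)) = 1 + (\<Sum>k\<in>{1..n-1}. z ^ (2*k))"
    "(\<Sum>k\<in>{0..n-1}. z ^ (2*k+1)) = z * (\<Sum>k<n. z ^ (2*k))"
    by (simp_all add: sum_distrib_left distrib_left)
  moreover have powers: "z ^ (2*n) = Z\<^sup>2" "z ^ (n+1) = z * Z"
    unfolding Z_def by (simp_all add: power_mult mult.commute)
  ultimately show ?thesis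
    using geometric unfolding p2n_def s_pol_def c_pol_def powers Z_def[symmetric] by (Groebner_Basis.algebra)
qed

lemma exp_half_angle_relations:
  fixes \<mu> :: complex and n :: nat
  defines "p \<equiv> exp (\<i> * (\<mu> * (of_nat n + 1) / 2))" and "q \<equiv> exp (\<i> * (\<mu> * (of_nat n - 1) / 2))"
  shows "exp (\<i> * \<mu>) ^ (n + 1) = p * p" and "exp (\<i> * \<mu>) ^ n = p * q" and "exp (\<i> * \<mu>) * q = p"
proof -
  have "p * p = exp (\<i> * (\<mu> * (of_nat n + 1) / 2) + \<i> * (\<mu> * (of_nat n + 1) / 2))"
    "p * q = exp (\<i> * (\<mu> * (of_nat n + 1) / 2) + \<i> * (\<mu> * (of_nat n - 1) / 2))"
    "exp (\<i> * \<mu>) * q = exp (\<i> * \<mu> + \<i> * (\<mu> * (of_nat n - 1) / 2))"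
    unfolding p_def q_def by (simp_all only: exp_add)
  moreover have "\<i> * (\<mu> * (of_nat n + 1) / 2) + \<i> * (\<mu> * (of_nat n + 1) / 2) = of_nat (n + 1) * (\<i> * \<mu>)"
    "\<i> * (\<mu> * (of_nat n + 1) / 2) + \<i> * (\<mu> * (of_nat n - 1) / 2) = of_nat n * (\<i> * \<mu>)"
    "\<i> * \<mu> + \<i> * (\<mu> * (of_nat n - 1) / 2) = \<i> * (\<mu> * (of_nat n + 1) / 2)"
    by (simp_all add: field_simps)
  ultimately show "exp (\<i> * \<mu>) ^ (n + 1) = p * p" and "exp (\<i> * \<mu>) ^ n = p * q" and "exp (\<i> * \<mu>) * q = p"
    unfolding p_def by (simp_all only: exp_of_nat_mult)
qed

lemma sin_exp_inverse: "sin w * (2 * \<i>) = exp (\<i> * w) - inverse (exp (\<i> * w))"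
proof -
  have "sin w = (exp (\<i> * w) - inverse (exp (\<i> * w))) / (2 * \<i>)" by (simp add: sin_exp_eq exp_minus)
  moreover have "(2 * \<i> :: complex) \<noteq> 0" by simp
  ultimately show ?thesis by (metis nonzero_eq_divide_eq)
qed

lemma cos_exp_inverse: "cos w * 2 = exp (\<i> * w) + inverse (exp (\<i> * w))"
  by (simp add: cos_exp_eq exp_minus)

lemma s_pol_exp_root:
  fixes \<mu> :: complex
  assumes "sin (\<mu> * (of_nat n + 1) / 2) = of_real \<rho> * sin (\<mu> * (of_nat n - 1) / 2)"
  shows "s_pol n \<rho> (exp (\<i> * \<mu>)) = 0"
proof -
  define p where "p = exp (\<i> * (\<mu> * (of_nat n + 1) / 2))"
  define q where "q = exp (\<i> * (\<mu> * (of_nat n - 1) / 2))"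
  have "p * inverse p = 1" "q * inverse q = 1" unfolding p_def q_def by simp_all
  moreover note sin_exp_inverse[of "\<mu> * (of_nat n + 1) / 2", folded p_def]
    sin_exp_inverse[of "\<mu> * (of_nat n - 1) / 2", folded q_def]
    exp_half_angle_relations(3)[of \<mu> n, folded p_def q_def]
  ultimately
  show ?thesis
    using assms unfolding s_pol_def exp_half_angle_relations(1,2)[of \<mu> n, folded p_def q_def]
    by (Groebner_Basis.algebra)
qed

lemma c_pol_exp_root:
  fixes \<mu> :: complex
  assumes "cos (\<mu> * (of_nat n + 1) / 2) = of_real \<rho> * cos (\<mu> * (of_nat n - 1) / 2)"
  shows "c_pol n \<rho> (exp (\<i> * \<mu>)) = 0"
proof -
  define p where "p = exp (\<i> * (\<mu> * (of_nat n + 1) / 2))"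
  define q where "q = exp (\<i> * (\<mu> * (of_nat n - 1) / 2))"
  have "p * inverse p = 1" "q * inverse q = 1" unfolding p_def q_def by simp_all
  moreover note cos_exp_inverse[of "\<mu> * (of_nat n + 1) / 2", folded p_def]
    cos_exp_inverse[of "\<mu> * (of_nat n - 1) / 2", folded q_def]
    exp_half_angle_relations(3)[of \<mu> n, folded p_def q_def]
  ultimately
  show ?thesis
    using assms unfolding c_pol_def exp_half_angle_relations(1,2)[of \<mu> n, folded p_def q_def]
    by (Groebner_Basis.algebra)
qed

lemma exp_squared_neq_1:
  fixes \<mu> :: complex
  assumes "sin \<mu> \<noteq> 0"
  shows "exp (\<i> * \<mu>) ^ 2 \<noteq> 1"
proof
  assume "exp (\<i> * \<mu>) ^ 2 = 1"
  then have "inverse (exp (\<i> * \<mu>)) = exp (\<i> * \<mu>)"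
    by (metis inverse_unique power2_eq_square)
  then have "sin \<mu> * (2 * \<i>) = 0" using sin_exp_inverse[of \<mu>] by simp
  with assms show False by simp
qed

lemma eig_of_zero_exp:
  assumes "lam_formula1_denom \<rho> \<mu> \<noteq> 0"
  shows "eig_of_zero \<rho> (exp (\<i> * \<mu>)) = lam_formula1 \<rho> \<mu>"
proof -
  define e where "e = exp (\<i> * \<mu>)"
  have "e * inverse e = 1" unfolding e_def by simp
  with cos_exp_inverse[of \<mu>, folded e_def]
  have "(e - of_real \<rho>) * (1 - of_real \<rho> * e) = e * lam_formula1_denom \<rho> \<mu>"
    unfolding lam_formula1_denom_def by (Groebner_Basis.algebra)
  then show ?thesis
    using assms unfolding eig_of_zero_def lam_formula1_def lam_formula1_denom_def e_def[symmetric]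
    by (simp add: e_def)
qed

lemma eig_of_zero_eq_lam_formula1D:
  assumes "\<rho> \<noteq> 0" "\<rho>\<^sup>2 \<noteq> 1" "lam_formula1_denom \<rho> \<mu> \<noteq> 0"
    and "eig_of_zero \<rho> z = lam_formula1 \<rho> \<mu>"
  shows "z = exp (\<i> * \<mu>) \<or> z = inverse (exp (\<i> * \<mu>))"
proof -
  define e where "e = exp (\<i> * \<mu>)"
  define r where "r = complex_of_real \<rho>"
  define D where "D = lam_formula1_denom \<rho> \<mu>"
  have "1 - r\<^sup>2 \<noteq> 0"
    using one_minus_of_real_square_neq_0[OF assms(2)] unfolding r_def .
  then have "lam_formula1 \<rho> \<mu> \<noteq> 0"
    using assms(3) unfolding lam_formula1_def lam_formula1_denom_def r_def by simp
  then have "(z - r) * (1 - r * z) \<noteq> 0"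
    using assms(4) unfolding eig_of_zero_def r_def by auto
  with assms(3,4) have "(1 - r\<^sup>2) * (z * D) = (1 - r\<^sup>2) * ((z - r) * (1 - r * z))"
    unfolding eig_of_zero_def lam_formula1_def D_def lam_formula1_denom_def r_def
    by (simp add: divide_simps)
  with \<open>1 - r\<^sup>2 \<noteq> 0\<close> have "z * D = (z - r) * (1 - r * z)" by simp
  moreover have "e * inverse e = 1" unfolding e_def by simp
  moreover note cos_exp_inverse[of \<mu>, folded e_def]
  ultimately have "r * ((z - e) * (z - inverse e)) = 0"
    unfolding D_def lam_formula1_denom_def r_def[symmetric] by (Groebner_Basis.algebra)
  then show ?thesis using assms(1) unfolding r_def e_def by simp
qed

lemma eig_type_of_exp_root:
  fixes P :: "complex \<Rightarrow> complex"
  assumes "\<rho> \<noteq> 0" "\<rho>\<^sup>2 \<noteq> 1" "lam_formula1_denom \<rho> \<mu> \<noteq> 0"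
    and "P (exp (\<i> * \<mu>)) = 0" "P (exp (- (\<i> * \<mu>))) = 0" "p2n n \<rho> (exp (\<i> * \<mu>)) = 0"
  shows "(\<exists>z. p2n n \<rho> z = 0 \<and> eig_of_zero \<rho> z = lam_formula1 \<rho> \<mu>) \<and>
    (\<forall>z. p2n n \<rho> z = 0 \<and> eig_of_zero \<rho> z = lam_formula1 \<rho> \<mu> \<longrightarrow> P z = 0 \<and> P (inverse z) = 0)"
proof -
  have "P z = 0 \<and> P (inverse z) = 0" if "eig_of_zero \<rho> z = lam_formula1 \<rho> \<mu>" for z
  proof -
    have "z = exp (\<i> * \<mu>) \<or> z = inverse (exp (\<i> * \<mu>))"
      using eig_of_zero_eq_lam_formula1D[OF assms(1-3) that] .
    then show ?thesis using assms(4,5) by (auto simp: exp_minus)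
  qed
  then show ?thesis using assms(6) eig_of_zero_exp[OF assms(3)] by blast
qed

lemma kms_eig_type:
  fixes \<mu> :: complex
  assumes boundary: "trig k (\<mu> * (of_nat n + 1) / 2) = of_real \<rho> * trig k (\<mu> * (of_nat n - 1) / 2)"
    and "n \<ge> 1" "\<rho> \<noteq> 0" "\<rho>\<^sup>2 \<noteq> 1" "sin \<mu> \<noteq> 0" "lam_formula1_denom \<rho> \<mu> \<noteq> 0"
  shows "(odd k \<longrightarrow> eig_type1 n \<rho> (lam_formula1 \<rho> \<mu>)) \<and> (even k \<longrightarrow> eig_type2 n \<rho> (lam_formula1 \<rho> \<mu>))"
proof -
  have boundary': "trig k ((- \<mu>) * (of_nat n + 1) / 2) = of_real \<rho> * trig k ((- \<mu>) * (of_nat n - 1) / 2)"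
    using boundary trig_minus[of k "\<mu> * (of_nat n + 1) / 2"] trig_minus[of k "\<mu> * (of_nat n - 1) / 2"] by simp
  have root: "p2n n \<rho> (exp (\<i> * \<mu>)) = 0" if "s_pol n \<rho> (exp (\<i> * \<mu>)) * c_pol n \<rho> (exp (\<i> * \<mu>)) = 0"
    using p2n_factorisation[OF \<open>n \<ge> 1\<close>, of "exp (\<i> * \<mu>)" \<rho>] exp_squared_neq_1[OF \<open>sin \<mu> \<noteq> 0\<close>] that
    by auto
  show ?thesis
  proof (cases "even k")
    case True
    with boundary boundary' have "c_pol n \<rho> (exp (\<i> * \<mu>)) = 0" "c_pol n \<rho> (exp (- (\<i> * \<mu>))) = 0"
      using c_pol_exp_root[of \<mu> n \<rho>] c_pol_exp_root[of "- \<mu>" n \<rho>] by (simp_all add: trig_def)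
    with root have "eig_type2 n \<rho> (lam_formula1 \<rho> \<mu>)"
      unfolding eig_type2_def by (intro eig_type_of_exp_root[OF assms(3,4,6)]) simp_all
    with True show ?thesis by simp
  next
    case False
    with boundary boundary' have "s_pol n \<rho> (exp (\<i> * \<mu>)) = 0" "s_pol n \<rho> (exp (- (\<i> * \<mu>))) = 0"
      using s_pol_exp_root[of \<mu> n \<rho>] s_pol_exp_root[of "- \<mu>" n \<rho>] by (simp_all add: trig_def)
    with root have "eig_type1 n \<rho> (lam_formula1 \<rho> \<mu>)"
      unfolding eig_type1_def by (intro eig_type_of_exp_root[OF assms(3,4,6)]) simp_all
    with False show ?thesis by simp
  qed
qed

section \<open>The secular functions on the bands \<open>(\<alpha>\<^sub>k, \<gamma>\<^sub>k]\<close>\<close>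

definition secular :: "nat \<Rightarrow> nat \<Rightarrow> real \<Rightarrow> real" where
  "secular n k m = (if even k then ct n m else st n m)"

lemma secular_eq_trig_ratio:
  assumes "m \<noteq> 0 \<or> even k"
  shows "secular n k m = trig k (m * (real n + 1) / 2) / trig k (m * (real n - 1) / 2)"
  using assms by (auto simp: secular_def trig_def ct_def st_def)

lemma trig_eq_shifted_cos: "trig k (x::real) = (-1) ^ (k div 2) * cos (x - real k * pi / 2)"
proof (cases "even k")
  case True
  then obtain q where "k = 2 * q" by blast
  then show ?thesis by (simp add: trig_def cos_diff)
next
  case False
  then obtain q where k: "k = 2 * q + 1" using oddE by blast
  have "cos (x - real k * pi / 2) = cos ((x - pi / 2) - real q * pi)"
    by (rule arg_cong[where f = cos]) (simp add: k field_simps)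
  also have "\<dots> = (-1) ^ q * sin x" by (simp add: cos_diff)
  finally show ?thesis using k by (simp add: trig_def power_mult_distrib[symmetric])
qed

lemma alpha_lt_beta: "n \<ge> 2 \<Longrightarrow> k < n \<Longrightarrow> alpha n k < beta n k"
  unfolding alpha_def beta_def by (simp add: field_simps)

lemma beta_le_gamma: "n \<ge> 2 \<Longrightarrow> k < n \<Longrightarrow> beta n k \<le> gamma n k"
  unfolding gamma_def beta_def by (simp add: field_simps)

lemma beta_nonneg: "beta n k \<ge> 0"
  unfolding beta_def by simp

lemma alpha_nonneg: "n \<ge> 2 \<Longrightarrow> k \<ge> 1 \<Longrightarrow> alpha n k \<ge> 0"
  unfolding alpha_def by simp

lemma alpha_pos: "n \<ge> 2 \<Longrightarrow> k \<ge> 2 \<Longrightarrow> alpha n k > 0"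
  unfolding alpha_def by simp

lemma gamma_lt_pi: "n \<ge> 2 \<Longrightarrow> k < n \<Longrightarrow> gamma n k < pi"
  unfolding gamma_def by (simp add: field_simps)

text \<open>On the band \<open>(\<alpha>\<^sub>k, \<gamma>\<^sub>k]\<close> both shifted half-angles stay in \<open>(-\<pi>/2, \<pi>/2]\<close>, which turns the
  secular equation into an equation between two cosines.\<close>
lemma secular_on_band:
  assumes "n \<ge> 2" "k < n" "alpha n k < m" "m \<le> gamma n k" "0 \<le> m"
  defines "u \<equiv> m * (real n - 1) / 2 - real k * pi / 2"
    and "v \<equiv> m * (real n + 1) / 2 - real k * pi / 2"
  shows "-(pi/2) < u" "u < pi/2" "-(pi/2) < v" "v \<le> pi/2" "cos u > 0"
    and "trig k (m * (real n - 1) / 2) \<noteq> 0"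
    and "secular n k m = cos v / cos u"
proof -
  have lower: "(real k - 1) * pi < m * (real n - 1)"
    using assms(1,3) unfolding alpha_def by (simp add: field_simps)
  have upper: "m * (real n + 1) \<le> (real k + 1) * pi"
    using assms(4) unfolding gamma_def by (simp add: field_simps)
  have "m * (real n - 1) \<le> m * (real n + 1)" using assms(5) by (simp add: mult_left_mono)
  moreover have "m * (real n - 1) < (real k + 1) * pi"
  proof (cases "m = 0")
    case False
    then have "m * (real n - 1) < m * (real n + 1)" using assms(5) by simp
    with upper show ?thesis by simp
  qed simp
  ultimately show "-(pi/2) < u" "u < pi/2" "-(pi/2) < v" "v \<le> pi/2"
    using lower upper unfolding u_def v_def by (simp_all add: field_simps)
  then show "cos u > 0" by (intro cos_gt_zero_pi) auto
  then show "trig k (m * (real n - 1) / 2) \<noteq> 0"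
    unfolding trig_eq_shifted_cos u_def by simp
  have "m \<noteq> 0 \<or> even k"
    using assms(1,3) alpha_nonneg[of n k] odd_pos[of k] by fastforce
  with \<open>cos u > 0\<close> show "secular n k m = cos v / cos u"
    unfolding secular_eq_trig_ratio[OF \<open>m \<noteq> 0 \<or> even k\<close>] trig_eq_shifted_cos u_def v_def
    by (simp add: power_mult_distrib[symmetric])
qed

lemma half_angles_at_beta:
  assumes "n \<ge> 2"
  shows "beta n k * (real n - 1) / 2 - real k * pi / 2 = - (beta n k / 2)"
    and "beta n k * (real n + 1) / 2 - real k * pi / 2 = beta n k / 2"
  using assms unfolding beta_def by (simp_all add: field_simps)

lemma cos_half_beta_nonneg:
  assumes "n \<ge> 2" "k < n"
  shows "cos (beta n k / 2) \<ge> 0"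
proof (rule cos_ge_zero)
  show "- (pi / 2) \<le> beta n k / 2" using beta_nonneg[of n k] pi_gt_zero by linarith
  show "beta n k / 2 \<le> pi / 2" using assms unfolding beta_def by (simp add: field_simps)
qed

lemma secular_beta: "n \<ge> 2 \<Longrightarrow> k < n \<Longrightarrow> secular n k (beta n k) = 1"
  using secular_on_band(5,7)[of n k "beta n k"] alpha_lt_beta beta_le_gamma beta_nonneg
  unfolding beta_def by (simp add: field_simps)

lemma secular_eq_0D:
  assumes "n \<ge> 2" "k < n" "alpha n k < m" "m \<le> gamma n k" "0 \<le> m" "secular n k m = 0"
  shows "m = gamma n k"
proof -
  let ?v = "m * (real n + 1) / 2 - real k * pi / 2"
  note band = secular_on_band[OF assms(1-5)]
  have "cos ?v = 0" using band(5,7) assms(6) by simp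
  moreover have "cos ?v > 0" if "?v < pi/2" using band(3) that by (intro cos_gt_zero_pi) auto
  ultimately have "?v = pi / 2" using band(4) by fastforce
  then show ?thesis unfolding gamma_def by (simp add: field_simps)
qed

lemma secular_eq_1D:
  assumes "n \<ge> 2" "k < n" "alpha n k < m" "m \<le> gamma n k" "0 \<le> m" "secular n k m = 1"
  shows "m = beta n k \<or> m = 0"
proof -
  let ?u = "m * (real n - 1) / 2 - real k * pi / 2"
  let ?v = "m * (real n + 1) / 2 - real k * pi / 2"
  note band = secular_on_band[OF assms(1-5)]
  have "cos ?v = cos ?u" using band(5,7) assms(6) by simp
  moreover have "cos \<bar>x\<bar> = cos x" for x :: real by (simp add: abs_if)
  ultimately have "cos \<bar>?v\<bar> = cos \<bar>?u\<bar>" by simp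
  moreover have "\<bar>?u\<bar> \<le> pi" "\<bar>?v\<bar> \<le> pi" using band(1-4) pi_gt_zero by linarith+
  ultimately have "\<bar>?v\<bar> = \<bar>?u\<bar>" by (simp add: cos_inj_pi)
  then have "?v = ?u \<or> ?v = - ?u" by (simp add: abs_eq_iff)
  with assms(1) show ?thesis unfolding beta_def by (auto simp: field_simps)
qed

lemma secular_root_low:
  assumes "n \<ge> 2" "k < n" "0 \<le> \<rho>" "\<rho> \<le> 1"
  shows "\<exists>m. beta n k \<le> m \<and> m \<le> gamma n k \<and> secular n k m = \<rho>"
proof -
  define G where "G m = \<rho> * cos (m * (real n - 1) / 2 - real k * pi / 2) - cos (m * (real n + 1) / 2 - real k * pi / 2)" for m
  have band: "alpha n k < m" "0 \<le> m" if "beta n k \<le> m" for m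
    using that alpha_lt_beta[OF assms(1,2)] beta_nonneg[of n k] by auto
  have "G (beta n k) \<le> 0"
    unfolding G_def half_angles_at_beta[OF assms(1)]
    using mult_right_mono[OF assms(4) cos_half_beta_nonneg[OF assms(1,2)]] by simp
  moreover have "G (gamma n k) \<ge> 0"
  proof -
    have angle: "gamma n k * (real n + 1) / 2 - real k * pi / 2 = pi / 2"
      unfolding gamma_def by (simp add: field_simps)
    have "alpha n k < gamma n k" "0 \<le> gamma n k"
      using band[OF beta_le_gamma[OF assms(1,2)]] by auto
    then have "cos (gamma n k * (real n - 1) / 2 - real k * pi / 2) > 0"
      using secular_on_band(5)[OF assms(1,2) _ order_refl] by blast
    then show ?thesis using assms(3) unfolding G_def angle by simp
  qed
  moreover have "continuous_on {beta n k..gamma n k} G" unfolding G_def by (intro continuous_intros) auto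
  ultimately obtain m where m: "beta n k \<le> m" "m \<le> gamma n k" "G m = 0"
    using IVT'[of G "beta n k" 0 "gamma n k"] beta_le_gamma[OF assms(1,2)] by auto
  with secular_on_band(5,7)[OF assms(1,2) band(1)[OF m(1)] m(2) band(2)[OF m(1)]]
  have "secular n k m = \<rho>" unfolding G_def by (simp add: divide_eq_eq)
  with m show ?thesis by blast
qed

lemma secular_root_high:
  assumes "n \<ge> 2" "2 \<le> k" "k < n" "1 \<le> \<rho>"
  shows "\<exists>m. alpha n k < m \<and> m \<le> beta n k \<and> secular n k m = \<rho>"
proof -
  define G where "G m = \<rho> * cos (m * (real n - 1) / 2 - real k * pi / 2) - cos (m * (real n + 1) / 2 - real k * pi / 2)" for m
  have "0 < alpha n k" "alpha n k < pi" using assms(1-3) unfolding alpha_def by (auto simp: field_simps)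
  moreover have "alpha n k * (real n - 1) / 2 - real k * pi / 2 = - (pi / 2)"
    "alpha n k * (real n + 1) / 2 - real k * pi / 2 = alpha n k - pi / 2"
    using assms(1) unfolding alpha_def by (simp_all add: field_simps)
  ultimately have "G (alpha n k) < 0"
    unfolding G_def using sin_gt_zero[of "alpha n k"] by (simp add: cos_diff)
  moreover have "G (beta n k) \<ge> 0"
    unfolding G_def half_angles_at_beta[OF assms(1)]
    using mult_right_mono[OF assms(4) cos_half_beta_nonneg[OF assms(1,3)]] by simp
  moreover have "continuous_on {alpha n k..beta n k} G" unfolding G_def by (intro continuous_intros) auto
  ultimately obtain m where m: "alpha n k \<le> m" "m \<le> beta n k" "G m = 0"
    using IVT'[of G "alpha n k" 0 "beta n k"] alpha_lt_beta[OF assms(1,3)] by fastforce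
  then have band: "alpha n k < m" "0 \<le> m" "m \<le> gamma n k"
    using \<open>G (alpha n k) < 0\<close> \<open>0 < alpha n k\<close> beta_le_gamma[OF assms(1,3)] by (auto simp: order.order_iff_strict)
  with secular_on_band(5,7)[OF assms(1,3) band(1,3,2)] m have "secular n k m = \<rho>"
    unfolding G_def by (simp add: divide_eq_eq)
  with band m show ?thesis by blast
qed

section \<open>The hyperbolic secular functions and the removable singularity of \<open>s\<^sub>n\<close>\<close>

lemma cosh_le_ch:
  assumes "n \<ge> 2" "x \<ge> 0"
  shows "cosh x \<le> ch n x"
proof -
  define b where "b = x * (real n - 1) / 2"
  have sum: "x * (real n + 1) / 2 = b + x" unfolding b_def by (simp add: field_simps)
  have "b \<ge> 0" unfolding b_def using assms by simp
  then have "cosh b * cosh x \<le> cosh b * cosh x + sinh b * sinh x" using assms(2) by simp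
  also have "\<dots> = cosh (x * (real n + 1) / 2)" unfolding sum cosh_add by simp
  finally show ?thesis unfolding ch_def b_def[symmetric] by (simp add: pos_le_divide_eq mult.commute)
qed

lemma cosh_le_sh:
  assumes "n \<ge> 2" "x > 0"
  shows "cosh x \<le> sh n x"
proof -
  define b where "b = x * (real n - 1) / 2"
  have sum: "x * (real n + 1) / 2 = b + x" unfolding b_def by (simp add: field_simps)
  have "b > 0" unfolding b_def using assms by simp
  then have "sinh b * cosh x \<le> sinh b * cosh x + cosh b * sinh x" using assms(2) by simp
  also have "\<dots> = sinh (x * (real n + 1) / 2)" unfolding sum sinh_add by simp
  finally show ?thesis
    unfolding sh_def b_def[symmetric] using assms(2) \<open>b > 0\<close> by (simp add: pos_le_divide_eq mult.commute)
qed

lemma ch_less_sh: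
  assumes "n \<ge> 2" "x > 0"
  shows "ch n x < sh n x"
proof -
  define a where "a = x * (real n + 1) / 2"
  define b where "b = x * (real n - 1) / 2"
  have "a - b = x" unfolding a_def b_def by (simp add: field_simps)
  have "b > 0" unfolding b_def using assms by simp
  have "0 < sinh (a - b)" unfolding \<open>a - b = x\<close> using assms(2) by simp
  then have "cosh a * sinh b < sinh a * cosh b" unfolding sinh_diff by simp
  then show ?thesis
    unfolding ch_def sh_def a_def[symmetric] b_def[symmetric] using assms(2) \<open>b > 0\<close> by (simp add: divide_simps)
qed

lemma ch_gt_1: "n \<ge> 2 \<Longrightarrow> x > 0 \<Longrightarrow> ch n x > 1"
  using cosh_le_ch[of n x] cosh_real_nonneg_less_iff[of 0 x] by simp

lemma continuous_on_ch: "continuous_on S (ch n)"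
  unfolding ch_def by (intro continuous_intros) (auto simp: add_pos_pos)

lemma tendsto_rescaled_quotient_at_0:
  fixes f :: "'a::real_normed_field \<Rightarrow> 'a"
  assumes "(f has_field_derivative 1) (at 0)" "f 0 = 0" "b \<noteq> 0"
  shows "((\<lambda>y. f (y * a) / f (y * b)) \<longlongrightarrow> a / b) (at 0)"
proof -
  have "((\<lambda>y. f (y * c) / y) \<longlongrightarrow> c) (at 0)" for c
  proof -
    have "((\<lambda>y. y * c) has_field_derivative c) (at 0)" by (auto intro!: derivative_eq_intros)
    then have "((\<lambda>y. f (y * c)) has_field_derivative 1 * c) (at 0)"
      using DERIV_chain2[of f 1 "\<lambda>y. y * c"] assms(1) by simp
    then show ?thesis using assms(2) by (simp add: has_field_derivative_iff)
  qed
  then have "((\<lambda>y. (f (y * a) / y) / (f (y * b) / y)) \<longlongrightarrow> a / b) (at 0)"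
    using assms(3) by (intro tendsto_divide) auto
  moreover have "\<forall>\<^sub>F y in at 0. (f (y * a) / y) / (f (y * b) / y) = f (y * a) / f (y * b)"
    unfolding eventually_at_filter by simp
  ultimately show ?thesis by (rule Lim_transform_eventually)
qed

lemma continuous_on_if_zero:
  fixes g :: "real \<Rightarrow> real"
  assumes "(g \<longlongrightarrow> v) (at 0)" and "\<And>y. y \<in> S \<Longrightarrow> y \<noteq> 0 \<Longrightarrow> isCont g y"
  shows "continuous_on S (\<lambda>y. if y = 0 then v else g y)"
proof (intro continuous_at_imp_continuous_on ballI)
  fix x assume "x \<in> S"
  show "isCont (\<lambda>y. if y = 0 then v else g y) x"
  proof (cases "x = 0")
    case True
    have "\<forall>\<^sub>F y in at 0. g y = (if y = 0 then v else g y)"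
      unfolding eventually_at_filter by simp
    with assms(1) show ?thesis unfolding True isCont_def by (auto intro: Lim_transform_eventually)
  next
    case False
    have "\<forall>\<^sub>F y in nhds x. (if y = 0 then v else g y) = g y"
      using t1_space_nhds[OF False] by (rule eventually_mono) simp
    then show ?thesis using assms(2)[OF \<open>x \<in> S\<close> False] by (simp add: isCont_cong)
  qed
qed

lemma xi_eq_ratio: "n \<ge> 2 \<Longrightarrow> xi n = ((real n + 1) / 2) / ((real n - 1) / 2)"
  unfolding xi_def by (simp add: field_simps)

lemma continuous_on_sh:
  assumes "n \<ge> 2"
  shows "continuous_on S (sh n)"
proof -
  have "((\<lambda>y. sinh (y * ((real n + 1) / 2)) / sinh (y * ((real n - 1) / 2))) \<longlongrightarrow> xi n) (at 0)"
    unfolding xi_eq_ratio[OF assms] using assms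
    by (intro tendsto_rescaled_quotient_at_0) (auto intro!: derivative_eq_intros)
  then have "continuous_on S (\<lambda>y. if y = 0 then xi n else sinh (y * (real n + 1) / 2) / sinh (y * (real n - 1) / 2))"
    using assms by (intro continuous_on_if_zero) (auto intro!: continuous_intros)
  then show ?thesis unfolding sh_def .
qed

lemma continuous_on_st:
  assumes "n \<ge> 2"
  shows "continuous_on {0..beta n 1} (st n)"
proof -
  have "((\<lambda>y. sin (y * ((real n + 1) / 2)) / sin (y * ((real n - 1) / 2))) \<longlongrightarrow> xi n) (at 0)"
    unfolding xi_eq_ratio[OF assms] using assms
    by (intro tendsto_rescaled_quotient_at_0) (auto intro!: derivative_eq_intros)
  moreover have "sin (y * (real n - 1) / 2) \<noteq> 0" if "y \<in> {0..beta n 1}" "y \<noteq> 0" for y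
    using secular_on_band(6)[OF assms, of 1 y] that alpha_lt_beta[OF assms, of 1] beta_le_gamma[OF assms, of 1] assms
    unfolding alpha_def trig_def by auto
  ultimately have "continuous_on {0..beta n 1} (\<lambda>y. if y = 0 then xi n else sin (y * (real n + 1) / 2) / sin (y * (real n - 1) / 2))"
    by (intro continuous_on_if_zero) (auto intro!: continuous_intros)
  then show ?thesis unfolding st_def .
qed

lemma ch_root_exists:
  assumes "n \<ge> 2" "1 \<le> \<rho>"
  shows "\<exists>x\<ge>0. ch n x = \<rho>"
proof -
  have "ch n 0 \<le> \<rho>" "\<rho> \<le> ch n (arcosh \<rho>)" "0 \<le> arcosh \<rho>"
    using assms cosh_le_ch[OF assms(1) arcosh_nonneg_real] by (simp_all add: ch_def cosh_arcosh_real)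
  with IVT'[of "ch n" 0 \<rho> "arcosh \<rho>"] continuous_on_ch show ?thesis by auto
qed

lemma sh_root_exists:
  assumes "n \<ge> 2" "xi n \<le> \<rho>"
  shows "\<exists>x\<ge>0. sh n x = \<rho>"
proof -
  have "1 < \<rho>" using xi_gt_1[OF assms(1)] assms(2) by simp
  then have "0 < arcosh \<rho>" by (simp add: arcosh_real_gt_1_iff)
  then have "sh n 0 \<le> \<rho>" "\<rho> \<le> sh n (arcosh \<rho>)"
    using assms(2) cosh_le_sh[OF assms(1), of "arcosh \<rho>"] \<open>1 < \<rho>\<close> by (simp_all add: sh_def cosh_arcosh_real)
  with IVT'[of "sh n" 0 \<rho> "arcosh \<rho>"] continuous_on_sh[OF assms(1)] \<open>0 < arcosh \<rho>\<close> show ?thesis by auto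
qed

lemma st_root_exists:
  assumes "n \<ge> 2" "1 \<le> \<rho>" "\<rho> \<le> xi n"
  shows "\<exists>m. 0 \<le> m \<and> m \<le> beta n 1 \<and> st n m = \<rho>"
proof -
  have "st n (beta n 1) \<le> \<rho>" "\<rho> \<le> st n 0"
    using assms secular_beta[OF assms(1), of 1] by (simp_all add: secular_def st_def)
  with IVT2'[of "st n" "beta n 1" \<rho> 0] beta_nonneg continuous_on_st[OF assms(1)] show ?thesis by auto
qed

definition param_domain :: "complex \<Rightarrow> bool" where
  "param_domain \<mu> \<longleftrightarrow> (\<exists>m. \<mu> = of_real m \<and> 0 \<le> m \<and> m < pi) \<or> (\<exists>x. \<mu> = \<i> * of_real x \<and> 0 \<le> x)"

lemma cos_i_times_of_real: "cos (\<i> * of_real y) = of_real (cosh y)"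
  using cosh_real[of y] by (simp add: cosh_def exp_minus)

lemma sin_i_times_of_real: "sin (\<i> * of_real y) = \<i> * of_real (sinh y)"
proof -
  have "of_real (sinh y) = - \<i> * sin (\<i> * of_real y)"
    using sinh_real[of y] by (simp add: sinh_def exp_minus)
  then show ?thesis by simp
qed

lemma half_angles_of_real:
  fixes m :: real
  shows "(of_real m :: complex) * (of_nat n + 1) / 2 = of_real (m * (real n + 1) / 2)"
    "(of_real m :: complex) * (of_nat n - 1) / 2 = of_real (m * (real n - 1) / 2)"
    "\<i> * of_real m * (of_nat n + 1) / 2 = \<i> * of_real (m * (real n + 1) / 2)"
    "\<i> * of_real m * (of_nat n - 1) / 2 = \<i> * of_real (m * (real n - 1) / 2)"
  by simp_all

lemma param_domain_sin_nonzero: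
  assumes "param_domain \<mu>" "\<mu> \<noteq> 0"
  shows "sin \<mu> \<noteq> 0"
  using assms(1) unfolding param_domain_def
proof (elim disjE exE conjE)
  fix m assume "\<mu> = of_real m" "0 \<le> m" "m < pi"
  with assms(2) have "sin m > 0" by (intro sin_gt_zero) auto
  then show ?thesis using \<open>\<mu> = of_real m\<close> by (simp add: sin_of_real)
next
  fix x assume "\<mu> = \<i> * of_real x"
  with assms(2) show ?thesis by (simp add: sin_i_times_of_real)
qed

lemma param_domain_cos_inj:
  assumes "param_domain \<mu>" "param_domain \<nu>" "cos \<mu> = cos \<nu>"
  shows "\<mu> = \<nu>"
proof -
  have cos_eq_1: "m = 0" if "0 \<le> m" "m < pi" "cos m = 1" for m :: real
    using cos_inj_pi[of m 0] that by simp
  have cos_cosh: "m = 0 \<and> x = 0" if "0 \<le> m" "m < pi" "0 \<le> x" "cos m = cosh x" for m x :: real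
    using cos_le_one[of m] cosh_real_ge_1[of x] that cos_eq_1 by (metis antisym cosh_real_one_iff)
  show ?thesis
    using assms unfolding param_domain_def
    by (auto simp: cos_of_real cos_i_times_of_real cos_inj_pi cosh_real_nonneg_le_iff dest: cos_cosh sym)
qed

lemma lam_formula1_inj:
  assumes "\<rho> \<noteq> 0" "\<rho>\<^sup>2 \<noteq> 1" "lam_formula1_denom \<rho> \<mu> \<noteq> 0" "lam_formula1_denom \<rho> \<nu> \<noteq> 0"
    and "param_domain \<mu>" "param_domain \<nu>" "lam_formula1 \<rho> \<mu> = lam_formula1 \<rho> \<nu>"
  shows "\<mu> = \<nu>"
proof -
  from one_minus_of_real_square_neq_0[OF assms(2)] have "lam_formula1_denom \<rho> \<mu> = lam_formula1_denom \<rho> \<nu>"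
    using assms(3,4,7) unfolding lam_formula1_def lam_formula1_denom_def by (auto simp: divide_simps)
  then have "cos \<mu> = cos \<nu>" using assms(1) unfolding lam_formula1_denom_def by simp
  then show ?thesis using param_domain_cos_inj assms(5,6) by blast
qed

text \<open>The last disjunct is the linear eigenvector at \<open>\<rho> = \<xi>\<^sub>n\<close>.\<close>
definition eigen_param :: "nat \<Rightarrow> real \<Rightarrow> nat \<Rightarrow> complex \<Rightarrow> bool" where
  "eigen_param n \<rho> k \<mu> \<longleftrightarrow> param_domain \<mu> \<and>
    ((trig k (\<mu> * (of_nat n + 1) / 2) = of_real \<rho> * trig k (\<mu> * (of_nat n - 1) / 2) \<and>
      trig k (\<mu> * (of_nat n - 1) / 2) \<noteq> 0)
     \<or> (\<mu> = 0 \<and> \<rho> = xi n \<and> k = 1))"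

lemma eigen_param_eigenvalue:
  assumes "n \<ge> 2" "\<rho>\<^sup>2 \<noteq> 1" "eigen_param n \<rho> k \<mu>"
  shows "lam_formula1_denom \<rho> \<mu> \<noteq> 0 \<and> eigenvalue (map_mat complex_of_real (KMS n \<rho>)) (lam_formula1 \<rho> \<mu>)"
  using assms kms_eigenvalue_of_trig[of k \<mu> n \<rho>] kms_eigenvalue_xi[OF assms(1)]
  unfolding eigen_param_def by auto

lemma eigen_param_lam_formula2:
  assumes "n \<ge> 2" "eigen_param n \<rho> k \<mu>" "\<mu> \<noteq> 0 \<or> k = 1"
  shows "lam_formula1_denom \<rho> \<mu> \<noteq> 0 \<and> lam_formula2 n k \<mu> = lam_formula1 \<rho> \<mu>"
proof (cases "\<mu> = 0")
  case True
  with assms have "\<rho> = xi n \<and> k = 1" unfolding eigen_param_def trig_def by auto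
  with True show ?thesis using lam_formula2_eq_lam_formula1_xi[OF assms(1)] by simp
next
  case False
  with assms(2) show ?thesis
    using lam_formula2_eq_lam_formula1 param_domain_sin_nonzero unfolding eigen_param_def by auto
qed

lemma trig_i_times_of_real:
  "trig k (\<i> * of_real x) = (if even k then of_real (cosh x) else \<i> * of_real (sinh x))"
  by (simp add: trig_def cos_i_times_of_real sin_i_times_of_real)

lemma eigen_param_of_real:
  assumes "n \<ge> 2" "k < n" "alpha n k < m" "m \<le> gamma n k" "0 \<le> m" "secular n k m = \<rho>"
  shows "eigen_param n \<rho> k (of_real m)"
proof -
  note nonzero = secular_on_band(6)[OF assms(1-5)]
  have "m \<noteq> 0 \<or> even k"
    using assms(1,3) alpha_nonneg[of n k] odd_pos[of k] by fastforce
  with assms(6) nonzero have "trig k (m * (real n + 1) / 2) = \<rho> * trig k (m * (real n - 1) / 2)"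
    by (simp add: secular_eq_trig_ratio divide_eq_eq)
  moreover have "param_domain (of_real m)"
    unfolding param_domain_def using assms(4,5) gamma_lt_pi[OF assms(1,2)] by auto
  ultimately show ?thesis
    using nonzero unfolding eigen_param_def half_angles_of_real trig_of_real by simp
qed

lemma eigen_param_of_ch:
  assumes "0 \<le> x" "ch n x = \<rho>"
  shows "eigen_param n \<rho> 0 (\<i> * of_real x)"
proof -
  have "cosh (x * (real n + 1) / 2) = \<rho> * cosh (x * (real n - 1) / 2)"
    using assms(2) unfolding ch_def by (simp add: divide_eq_eq)
  then show ?thesis
    using assms(1) unfolding eigen_param_def param_domain_def
    unfolding half_angles_of_real trig_i_times_of_real by simp
qed

lemma eigen_param_of_sh:
  assumes "n \<ge> 2" "0 \<le> x" "sh n x = \<rho>"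
  shows "eigen_param n \<rho> 1 (\<i> * of_real x)"
proof (cases "x = 0")
  case True
  with assms show ?thesis unfolding eigen_param_def param_domain_def sh_def by simp
next
  case False
  with assms have "sinh (x * (real n - 1) / 2) \<noteq> 0" by simp
  with assms(3) False have "sinh (x * (real n + 1) / 2) = \<rho> * sinh (x * (real n - 1) / 2)"
    unfolding sh_def by (simp add: divide_eq_eq)
  with \<open>sinh (x * (real n - 1) / 2) \<noteq> 0\<close> show ?thesis
    using assms(2) unfolding eigen_param_def param_domain_def
    unfolding half_angles_of_real trig_i_times_of_real by simp
qed

lemma eigen_param_of_st:
  assumes "n \<ge> 2" "0 \<le> m" "m \<le> beta n 1" "st n m = \<rho>"
  shows "eigen_param n \<rho> 1 (of_real m)"
proof (cases "m = 0")
  case True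
  with assms show ?thesis unfolding eigen_param_def param_domain_def st_def by simp
next
  case False
  with assms have "alpha n 1 < m" "m \<le> gamma n 1"
    using beta_le_gamma[OF assms(1), of 1] unfolding alpha_def by auto
  with assms show ?thesis by (intro eigen_param_of_real) (simp_all add: secular_def)
qed

definition slot_interval :: "nat \<Rightarrow> real \<Rightarrow> nat \<Rightarrow> real set" where
  "slot_interval n \<rho> k =
    (if \<rho> < 1 then {beta n k..gamma n k}
     else if k = 0 then {} else if k = 1 then {0..beta n 1} else {alpha n k<..beta n k})"

text \<open>The candidates for \<open>\<mu>\<^sub>k(\<rho>)\<close> in the statement; for \<open>k = 1\<close> and \<open>\<rho> = \<xi>\<^sub>n\<close> both the real and the
  imaginary description apply, and both give \<open>\<mu> = 0\<close>.\<close>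
definition slot :: "nat \<Rightarrow> real \<Rightarrow> nat \<Rightarrow> complex \<Rightarrow> bool" where
  "slot n \<rho> k \<mu> \<longleftrightarrow> (\<exists>m \<in> slot_interval n \<rho> k. \<mu> = of_real m \<and> secular n k m = \<rho>)
     \<or> (k = 0 \<and> 1 \<le> \<rho> \<and> (\<exists>x\<ge>0. \<mu> = \<i> * of_real x \<and> ch n x = \<rho>))
     \<or> (k = 1 \<and> xi n \<le> \<rho> \<and> (\<exists>x\<ge>0. \<mu> = \<i> * of_real x \<and> sh n x = \<rho>))"

lemma slot_eigen_param:
  assumes "n \<ge> 2" "k < n" "slot n \<rho> k \<mu>"
  shows "eigen_param n \<rho> k \<mu>"
proof -
  have real_case: "eigen_param n \<rho> k (of_real m)" if "m \<in> slot_interval n \<rho> k" "secular n k m = \<rho>" for m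
  proof (cases "\<rho> < 1 \<or> 2 \<le> k")
    case True
    with that have "alpha n k < m" "m \<le> gamma n k" "0 \<le> m"
      using alpha_lt_beta[OF assms(1,2)] beta_le_gamma[OF assms(1,2)] beta_nonneg[of n k] alpha_pos[OF assms(1), of k]
      unfolding slot_interval_def by (auto split: if_splits)
    then show ?thesis using eigen_param_of_real[OF assms(1,2) _ _ _ that(2)] by blast
  next
    case False
    with that have "k = 1" "0 \<le> m" "m \<le> beta n 1" "st n m = \<rho>"
      unfolding slot_interval_def secular_def by (auto split: if_splits)
    with assms(1) show ?thesis using eigen_param_of_st by simp
  qed
  from assms(3) show ?thesis
    unfolding slot_def using real_case eigen_param_of_ch eigen_param_of_sh[OF assms(1)] by auto
qed

lemma slot_exists:
  assumes "n \<ge> 2" "k < n" "0 \<le> \<rho>"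
  shows "\<exists>\<mu>. slot n \<rho> k \<mu>"
proof -
  consider "\<rho> < 1" | "1 \<le> \<rho>" "k = 0" | "1 \<le> \<rho>" "k = 1" "\<rho> \<le> xi n" | "xi n \<le> \<rho>" "k = 1"
    | "1 \<le> \<rho>" "2 \<le> k"
    by linarith
  then show ?thesis
  proof cases
    case 1
    then obtain m where "m \<in> {beta n k..gamma n k}" "secular n k m = \<rho>"
      using secular_root_low[OF assms] by auto
    with 1 have "slot n \<rho> k (of_real m)" unfolding slot_def slot_interval_def by auto
    then show ?thesis ..
  next
    case 2
    then obtain x where "x \<ge> 0" "ch n x = \<rho>" using ch_root_exists[OF assms(1)] by blast
    with 2 have "slot n \<rho> k (\<i> * of_real x)" unfolding slot_def by auto
    then show ?thesis ..
  next
    case 3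
    then obtain m where "m \<in> {0..beta n 1}" "st n m = \<rho>" using st_root_exists[OF assms(1)] by auto
    with 3 have "slot n \<rho> k (of_real m)" unfolding slot_def slot_interval_def secular_def by auto
    then show ?thesis ..
  next
    case 4
    then obtain x where "x \<ge> 0" "sh n x = \<rho>" using sh_root_exists[OF assms(1)] by blast
    with 4 have "slot n \<rho> k (\<i> * of_real x)" unfolding slot_def by auto
    then show ?thesis ..
  next
    case 5
    then obtain m where "m \<in> {alpha n k<..beta n k}" "secular n k m = \<rho>"
      using secular_root_high[OF assms(1) _ assms(2)] by auto
    with 5 have "slot n \<rho> k (of_real m)" unfolding slot_def slot_interval_def by auto
    then show ?thesis ..
  qed
qed

lemma gamma_lt_beta:
  assumes "n \<ge> 2" "j < k"
  shows "gamma n j < beta n k"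
proof -
  have "(real j + 1) * real n \<le> real k * real n" using assms(2) by (simp add: mult_right_mono)
  also have "\<dots> < real k * (real n + 1)" using assms(2) by (simp add: algebra_simps)
  finally have "pi * ((real j + 1) * real n) < pi * (real k * (real n + 1))" by simp
  then show ?thesis using assms(1) unfolding gamma_def beta_def by (simp add: field_simps)
qed

lemma beta_le_alpha:
  assumes "n \<ge> 2" "j < k"
  shows "beta n j \<le> alpha n k"
proof -
  have "real j * (real n - 1) \<le> (real k - 1) * (real n - 1)" using assms by (intro mult_right_mono) auto
  also have "\<dots> \<le> (real k - 1) * real n" using assms(2) by (simp add: algebra_simps)
  finally have "pi * (real j * (real n - 1)) \<le> pi * ((real k - 1) * real n)" by simp
  then show ?thesis using assms(1) unfolding alpha_def beta_def by (simp add: field_simps)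
qed

lemma of_real_eq_i_times_of_real_iff: "(of_real m = \<i> * of_real x) \<longleftrightarrow> m = 0 \<and> x = 0"
  by (simp add: complex_eq_iff)

lemma slot_0_1_disjoint:
  assumes "n \<ge> 2" "1 \<le> \<rho>" "slot n \<rho> 0 \<mu>" "slot n \<rho> 1 \<mu>"
  shows False
proof -
  from assms(2,3) obtain x where x: "x \<ge> 0" "\<mu> = \<i> * of_real x" "ch n x = \<rho>"
    unfolding slot_def slot_interval_def by auto
  have "ch n 0 = 1" "st n 0 = xi n" "1 < xi n" using xi_gt_1[OF assms(1)] by (simp_all add: ch_def st_def)
  from assms(2,4) x have "(\<exists>m. \<mu> = of_real m \<and> st n m = \<rho>) \<or> (xi n \<le> \<rho> \<and> sh n x = \<rho>)"
    unfolding slot_def slot_interval_def secular_def by auto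
  then show False
  proof
    assume "\<exists>m. \<mu> = of_real m \<and> st n m = \<rho>"
    with x have "x = 0" "st n 0 = \<rho>" by (auto simp: of_real_eq_i_times_of_real_iff)
    with x \<open>ch n 0 = 1\<close> \<open>st n 0 = xi n\<close> \<open>1 < xi n\<close> show False by simp
  next
    assume "xi n \<le> \<rho> \<and> sh n x = \<rho>"
    with x \<open>ch n 0 = 1\<close> \<open>1 < xi n\<close> ch_less_sh[OF assms(1), of x] show False
      by (cases "x = 0") auto
  qed
qed

lemma slot_disjoint:
  assumes "n \<ge> 2" "j < k" "k < n" "slot n \<rho> j \<mu>" "slot n \<rho> k \<mu>"
  shows False
proof (cases "\<rho> < 1")
  case True
  with assms(4,5) xi_gt_1[OF assms(1)] obtain m where "m \<le> gamma n j" "beta n k \<le> m"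
    unfolding slot_def slot_interval_def by auto
  with gamma_lt_beta[OF assms(1,2)] show False by simp
next
  case False
  have real_k: "\<exists>m>alpha n k. \<mu> = of_real m" if "2 \<le> k"
    using assms(5) that False unfolding slot_def slot_interval_def by auto
  consider "j = 0" "k = 1" | "j = 0" "2 \<le> k" | "j = 1" | "2 \<le> j"
    using assms(2) by linarith
  then show False
  proof cases
    case 1
    with assms(4,5) have "slot n \<rho> 0 \<mu>" "slot n \<rho> 1 \<mu>" by simp_all
    moreover have "1 \<le> \<rho>" using False by simp
    ultimately show False using slot_0_1_disjoint[OF assms(1)] by blast
  next
    case 2
    with assms(4) real_k False show False
      using alpha_pos[OF assms(1), of k]
      unfolding slot_def slot_interval_def by (auto simp: of_real_eq_i_times_of_real_iff)
  next
    case 3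
    with assms(2,4) real_k False show False
      using alpha_pos[OF assms(1), of k] beta_le_alpha[OF assms(1,2)]
      unfolding slot_def slot_interval_def by (auto simp: of_real_eq_i_times_of_real_iff)
  next
    case 4
    with assms(2,4) real_k False show False
      using beta_le_alpha[OF assms(1,2)]
      unfolding slot_def slot_interval_def by auto
  qed
qed

lemma slot_index_unique:
  assumes "n \<ge> 2" "j < n" "k < n" "slot n \<rho> j \<mu>" "slot n \<rho> k \<mu>"
  shows "j = k"
  using slot_disjoint[OF assms(1) _ assms(3,4,5)] slot_disjoint[OF assms(1) _ assms(2,5,4)]
  by (metis linorder_neqE_nat)

lemma slot_zero:
  assumes "n \<ge> 2" "slot n \<rho> k 0"
  shows "(k = 0 \<and> \<rho> = 1) \<or> (k = 1 \<and> \<rho> = xi n)"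
  using assms alpha_pos[OF assms(1), of k] xi_gt_1[OF assms(1)]
  unfolding slot_def slot_interval_def secular_def
  by (auto simp: beta_def ch_def sh_def ct_def st_def split: if_splits)

section \<open>Uniqueness of the roots by counting eigenvalues\<close>

lemma candidate_unique_by_counting:
  fixes P :: "nat \<Rightarrow> 'a \<Rightarrow> bool" and g :: "'a \<Rightarrow> 'b"
  assumes exists: "\<And>k. k < n \<Longrightarrow> \<exists>x. P k x"
    and disjoint: "\<And>j k x. j < n \<Longrightarrow> k < n \<Longrightarrow> P j x \<Longrightarrow> P k x \<Longrightarrow> j = k"
    and inj: "inj_on g {x. \<exists>k<n. P k x}"
    and into: "g ` {x. \<exists>k<n. P k x} \<subseteq> E" and "finite E" "card E \<le> n"
    and "k < n" "P k a" "P k b"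
  shows "a = b"
proof (rule ccontr)
  assume "a \<noteq> b"
  define f where "f j = (if j = k then a else (SOME x. P j x))" for j
  have f: "P j (f j)" if "j < n" for j
    using someI_ex[OF exists[OF that]] \<open>P k a\<close> unfolding f_def by auto
  have "inj_on f {..<n}"
    by (rule inj_onI) (use f disjoint in fastforce)
  moreover have "b \<notin> f ` {..<n}"
  proof
    assume "b \<in> f ` {..<n}"
    then obtain j where "j < n" "b = f j" by auto
    with f[of j] disjoint[of j k b] \<open>k < n\<close> \<open>P k b\<close> have "j = k" by simp
    with \<open>b = f j\<close> \<open>a \<noteq> b\<close> show False unfolding f_def by simp
  qed
  ultimately have "Suc n = card (insert b (f ` {..<n}))" by (simp add: card_image)
  also have sub: "insert b (f ` {..<n}) \<subseteq> {x. \<exists>k<n. P k x}" using f \<open>k < n\<close> \<open>P k b\<close> by auto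
  then have "card (insert b (f ` {..<n})) = card (g ` insert b (f ` {..<n}))"
    using card_image[OF inj_on_subset[OF inj sub]] by (simp only:)
  also have "\<dots> \<le> card E" using sub into by (intro card_mono \<open>finite E\<close>) blast
  finally show False using \<open>card E \<le> n\<close> by simp
qed

lemma eigenvalues_finite_card:
  fixes A :: "'a::field mat"
  assumes "A \<in> carrier_mat n n"
  shows "finite {x. eigenvalue A x}" and "card {x. eigenvalue A x} \<le> n"
proof -
  have "degree (char_poly A) = n" "char_poly A \<noteq> 0"
    using degree_monic_char_poly[OF assms] by auto
  moreover have "{x. eigenvalue A x} = {x. poly (char_poly A) x = 0}"
    using eigenvalue_root_char_poly[OF assms] by auto
  ultimately show "finite {x. eigenvalue A x}" "card {x. eigenvalue A x} \<le> n"
    using poly_roots_finite card_poly_roots_bound by metis+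
qed

lemma KMS_carrier: "map_mat complex_of_real (KMS n \<rho>) \<in> carrier_mat n n"
  by (simp add: KMS_def)

lemma slot_unique:
  assumes "n \<ge> 2" "0 < \<rho>" "\<rho> \<noteq> 1" "k < n" "slot n \<rho> k \<mu>" "slot n \<rho> k \<nu>"
  shows "\<mu> = \<nu>"
proof (rule candidate_unique_by_counting[where g = "lam_formula1 \<rho>"])
  let ?E = "{x. eigenvalue (map_mat complex_of_real (KMS n \<rho>)) x}"
  have "\<rho>\<^sup>2 \<noteq> 1" using assms(2,3) by (simp add: power2_eq_1_iff)
  have param: "eigen_param n \<rho> j x" "lam_formula1_denom \<rho> x \<noteq> 0" "lam_formula1 \<rho> x \<in> ?E"
    if "j < n" "slot n \<rho> j x" for j x
    using slot_eigen_param[OF assms(1) that] eigen_param_eigenvalue[OF assms(1) \<open>\<rho>\<^sup>2 \<noteq> 1\<close>] by auto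
  show "\<exists>x. slot n \<rho> j x" if "j < n" for j
    using slot_exists[OF assms(1) that] assms(2) by simp
  show "j = k" if "j < n" "k < n" "slot n \<rho> j x" "slot n \<rho> k x" for j k x
    using slot_index_unique[OF assms(1) that] .
  show "inj_on (lam_formula1 \<rho>) {x. \<exists>k<n. slot n \<rho> k x}"
    using lam_formula1_inj[OF _ \<open>\<rho>\<^sup>2 \<noteq> 1\<close>] assms(2) param(1,2)
    unfolding eigen_param_def by (intro inj_onI) auto
  show "lam_formula1 \<rho> ` {x. \<exists>k<n. slot n \<rho> k x} \<subseteq> ?E" using param(3) by auto
  show "finite ?E" "card ?E \<le> n" using eigenvalues_finite_card[OF KMS_carrier] by simp_all
qed (use assms in simp_all)

lemma secular_root_unique_low:
  assumes "n \<ge> 2" "k < n" "0 \<le> \<rho>" "\<rho> \<le> 1"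
  shows "\<exists>!m. m \<in> {beta n k..gamma n k} \<and> secular n k m = \<rho>"
proof (rule ex_ex1I)
  show "\<exists>m. m \<in> {beta n k..gamma n k} \<and> secular n k m = \<rho>"
    using secular_root_low[OF assms] by auto
  fix a b assume a: "a \<in> {beta n k..gamma n k} \<and> secular n k a = \<rho>"
    and b: "b \<in> {beta n k..gamma n k} \<and> secular n k b = \<rho>"
  have band: "alpha n k < m" "0 \<le> m" if "m \<in> {beta n k..gamma n k}" for m
    using that alpha_lt_beta[OF assms(1,2)] beta_nonneg[of n k] by auto
  consider "\<rho> = 0" | "\<rho> = 1" | "0 < \<rho>" "\<rho> < 1" using assms(3,4) by linarith
  then show "a = b"
  proof cases
    case 1
    then have "m = gamma n k" if "m \<in> {beta n k..gamma n k} \<and> secular n k m = \<rho>" for m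
      using that band[of m] secular_eq_0D[OF assms(1,2), of m] by auto
    then show ?thesis using a b by blast
  next
    case 2
    then have "m = beta n k" if "m \<in> {beta n k..gamma n k} \<and> secular n k m = \<rho>" for m
      using that band[of m] secular_eq_1D[OF assms(1,2), of m] beta_nonneg[of n k] by auto
    then show ?thesis using a b by blast
  next
    case 3
    with a b have "slot n \<rho> k (of_real a)" "slot n \<rho> k (of_real b)"
      unfolding slot_def slot_interval_def by auto
    from slot_unique[OF assms(1) _ _ assms(2) this] 3 show ?thesis by simp
  qed
qed

lemma secular_root_unique_high:
  assumes "n \<ge> 2" "2 \<le> k" "k < n" "1 \<le> \<rho>"
  shows "\<exists>!m. m \<in> {alpha n k<..beta n k} \<and> secular n k m = \<rho>"
proof (rule ex_ex1I)
  show "\<exists>m. m \<in> {alpha n k<..beta n k} \<and> secular n k m = \<rho>"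
    using secular_root_high[OF assms] by auto
  fix a b assume a: "a \<in> {alpha n k<..beta n k} \<and> secular n k a = \<rho>"
    and b: "b \<in> {alpha n k<..beta n k} \<and> secular n k b = \<rho>"
  show "a = b"
  proof (cases "\<rho> = 1")
    case True
    have "m = beta n k" if "m \<in> {alpha n k<..beta n k} \<and> secular n k m = \<rho>" for m
      using that True secular_eq_1D[OF assms(1,3), of m] alpha_pos[OF assms(1,2)] beta_le_gamma[OF assms(1,3)]
      by auto
    then show ?thesis using a b by blast
  next
    case False
    with a b assms(2,4) have "slot n \<rho> k (of_real a)" "slot n \<rho> k (of_real b)"
      unfolding slot_def slot_interval_def by auto
    from slot_unique[OF assms(1) _ _ assms(3) this] False assms(4) show ?thesis by simp
  qed
qed

lemma ch_root_unique:
  assumes "n \<ge> 2" "1 \<le> \<rho>"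
  shows "\<exists>!x. x \<in> {0..} \<and> ch n x = \<rho>"
proof (rule ex_ex1I)
  show "\<exists>x. x \<in> {0..} \<and> ch n x = \<rho>" using ch_root_exists[OF assms] by auto
  fix a b assume a: "a \<in> {0..} \<and> ch n a = \<rho>" and b: "b \<in> {0..} \<and> ch n b = \<rho>"
  show "a = b"
  proof (cases "\<rho> = 1")
    case True
    then have "x = 0" if "x \<in> {0..} \<and> ch n x = \<rho>" for x
      using that ch_gt_1[OF assms(1), of x] by force
    then show ?thesis using a b by blast
  next
    case False
    with a b assms(2) have "slot n \<rho> 0 (\<i> * of_real a)" "slot n \<rho> 0 (\<i> * of_real b)"
      unfolding slot_def by auto
    from slot_unique[OF assms(1) _ _ _ this] False assms show ?thesis by simp
  qed
qed

lemma sh_root_unique: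
  assumes "n \<ge> 2" "xi n \<le> \<rho>"
  shows "\<exists>!x. x \<in> {0..} \<and> sh n x = \<rho>"
proof (rule ex_ex1I)
  show "\<exists>x. x \<in> {0..} \<and> sh n x = \<rho>" using sh_root_exists[OF assms] by auto
  fix a b assume "a \<in> {0..} \<and> sh n a = \<rho>" "b \<in> {0..} \<and> sh n b = \<rho>"
  with assms(2) have "slot n \<rho> 1 (\<i> * of_real a)" "slot n \<rho> 1 (\<i> * of_real b)"
    unfolding slot_def by auto
  from slot_unique[OF assms(1) _ _ _ this] assms xi_gt_1[OF assms(1)] show "a = b" by simp
qed

lemma st_root_unique:
  assumes "n \<ge> 2" "1 \<le> \<rho>" "\<rho> \<le> xi n"
  shows "\<exists>!m. m \<in> {0..beta n 1} \<and> st n m = \<rho>"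
proof (rule ex_ex1I)
  show "\<exists>m. m \<in> {0..beta n 1} \<and> st n m = \<rho>" using st_root_exists[OF assms] by auto
  fix a b assume a: "a \<in> {0..beta n 1} \<and> st n a = \<rho>" and b: "b \<in> {0..beta n 1} \<and> st n b = \<rho>"
  show "a = b"
  proof (cases "\<rho> = 1")
    case True
    have "m = beta n 1" if "m \<in> {0..beta n 1} \<and> st n m = \<rho>" for m
    proof -
      have "m \<noteq> 0" using that True xi_gt_1[OF assms(1)] by (auto simp: st_def)
      with that True assms(1) show ?thesis
        using secular_eq_1D[OF assms(1), of 1 m] beta_le_gamma[OF assms(1), of 1]
        by (auto simp: alpha_def secular_def)
    qed
    then show ?thesis using a b by blast
  next
    case False
    with a b assms(2) have "slot n \<rho> 1 (of_real a)" "slot n \<rho> 1 (of_real b)"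
      unfolding slot_def slot_interval_def secular_def by auto
    from slot_unique[OF assms(1) _ _ _ this] False assms show ?thesis by simp
  qed
qed

lemma tur_unique: "\<exists>!x. x \<in> S \<and> P x \<Longrightarrow> tur P S \<in> S \<and> P (tur P S)"
  unfolding tur_def by (rule theI')

lemma mu_slot:
  assumes "n \<ge> 2" "0 \<le> \<rho>" "k < n"
  shows "slot n \<rho> k (mu n \<rho> k)"
proof -
  have low: "\<exists>!m. m \<in> {beta n k..gamma n k} \<and> (if even k then ct n m else st n m) = \<rho>" if "\<rho> < 1"
    using secular_root_unique_low[OF assms(1,3,2)] that unfolding secular_def by simp
  have high: "\<exists>!m. m \<in> {alpha n k<..beta n k} \<and> (if even k then ct n m else st n m) = \<rho>"
    if "1 \<le> \<rho>" "2 \<le> k"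
    using secular_root_unique_high[OF assms(1) that(2) assms(3) that(1)] unfolding secular_def by simp
  consider "k = 0" "1 \<le> \<rho>" | "k = 1" "xi n \<le> \<rho>" | "k = 1" "1 \<le> \<rho>" "\<rho> < xi n"
    | "\<rho> < 1" | "2 \<le> k" "1 \<le> \<rho>"
    by linarith
  then show ?thesis
  proof cases
    case 1
    with tur_unique[OF ch_root_unique[OF assms(1)]] show ?thesis unfolding mu_def slot_def by auto
  next
    case 2
    with tur_unique[OF sh_root_unique[OF assms(1)]] show ?thesis unfolding mu_def slot_def by auto
  next
    case 3
    with tur_unique[OF st_root_unique[OF assms(1)]] show ?thesis
      unfolding mu_def slot_def slot_interval_def secular_def by auto
  next
    case 4
    with tur_unique[OF low] xi_gt_1[OF assms(1)] show ?thesis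
      unfolding mu_def slot_def slot_interval_def secular_def by (auto simp: beta_def)
  next
    case 5
    with tur_unique[OF high] show ?thesis
      unfolding mu_def slot_def slot_interval_def secular_def by auto
  qed
qed

lemma mu_eigen_param: "n \<ge> 2 \<Longrightarrow> 0 \<le> \<rho> \<Longrightarrow> k < n \<Longrightarrow> eigen_param n \<rho> k (mu n \<rho> k)"
  using slot_eigen_param mu_slot by blast

lemma mu_inj:
  assumes "n \<ge> 2" "0 \<le> \<rho>" "j < n" "k < n" "mu n \<rho> j = mu n \<rho> k"
  shows "j = k"
  using slot_index_unique[OF assms(1,3,4)] mu_slot[OF assms(1,2)] assms(3-5) by metis

lemma lam_eq_lam_formula1:
  assumes "n \<ge> 2" "0 \<le> \<rho>" "k < n" "\<not> (k = 0 \<and> \<rho> = 1)"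
  shows "lam_formula1_denom \<rho> (mu n \<rho> k) \<noteq> 0 \<and> lam n \<rho> k = lam_formula1 \<rho> (mu n \<rho> k)"
proof -
  have "mu n \<rho> k \<noteq> 0 \<or> k = 1"
    using slot_zero[OF assms(1)] mu_slot[OF assms(1-3)] assms(4) by force
  then show ?thesis
    using eigen_param_lam_formula2[OF assms(1) mu_eigen_param[OF assms(1-3)]] unfolding lam_def by blast
qed

lemma slot_at_1:
  assumes "n \<ge> 2" "k < n" "slot n 1 k \<mu>"
  shows "\<mu> = (if k = 0 then 0 else of_real (beta n k))"
proof -
  have "1 < xi n" "st n 0 = xi n" using xi_gt_1[OF assms(1)] by (simp_all add: st_def)
  consider "k = 0" | "k = 1" | "2 \<le> k" by linarith
  then show ?thesis
  proof cases
    case 1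
    with assms(3) obtain x where "x \<ge> 0" "\<mu> = \<i> * of_real x" "ch n x = 1"
      unfolding slot_def slot_interval_def by auto
    with 1 show ?thesis using ch_gt_1[OF assms(1), of x] by fastforce
  next
    case 2
    with assms(3) \<open>1 < xi n\<close> obtain m where "0 \<le> m" "m \<le> beta n 1" "\<mu> = of_real m" "st n m = 1"
      unfolding slot_def slot_interval_def secular_def by auto
    moreover have "m \<noteq> 0" using \<open>st n m = 1\<close> \<open>st n 0 = xi n\<close> \<open>1 < xi n\<close> by auto
    ultimately show ?thesis
      using 2 assms(1) secular_eq_1D[OF assms(1), of 1 m] beta_le_gamma[OF assms(1), of 1]
      by (auto simp: alpha_def secular_def)
  next
    case 3
    with assms(3) obtain m where "alpha n k < m" "m \<le> beta n k" "\<mu> = of_real m" "secular n k m = 1"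
      unfolding slot_def slot_interval_def by auto
    with 3 show ?thesis
      using secular_eq_1D[OF assms(1,2), of m] alpha_pos[OF assms(1) 3] beta_le_gamma[OF assms(1,2)] by auto
  qed
qed

lemma mu_at_1:
  assumes "n \<ge> 2" "k < n"
  shows "mu n 1 k = (if k = 0 then 0 else of_real (beta n k))"
  using slot_at_1[OF assms mu_slot[OF assms(1) _ assms(2)]] by simp

lemma lam_at_1:
  assumes "n \<ge> 2" "k < n"
  shows "lam n 1 k = (if k = 0 then of_nat n else 0)"
proof -
  have "sin (of_nat n * complex_of_real (beta n k)) = of_real (sin (real k * pi))"
    using assms(1) unfolding beta_def by (simp add: sin_of_real[symmetric])
  moreover have "beta n k \<noteq> 0" if "k \<noteq> 0" using that assms(1) by (simp add: beta_def)
  ultimately show ?thesis unfolding lam_def lam_formula2_def mu_at_1[OF assms] by simp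
qed

lemma lam_eig_type:
  assumes "n \<ge> 2" "0 < \<rho>" "\<rho> \<noteq> 1" "\<rho> \<noteq> xi n" "k < n"
  shows "(odd k \<longrightarrow> eig_type1 n \<rho> (lam n \<rho> k)) \<and> (even k \<longrightarrow> eig_type2 n \<rho> (lam n \<rho> k))"
proof -
  have "mu n \<rho> k \<noteq> 0"
    using slot_zero[OF assms(1), of \<rho> k] mu_slot[OF assms(1) less_imp_le[OF assms(2)] assms(5)] assms(3,4)
    by force
  moreover note param = mu_eigen_param[OF assms(1) less_imp_le[OF assms(2)] assms(5)]
  ultimately have "sin (mu n \<rho> k) \<noteq> 0"
    "trig k (mu n \<rho> k * (of_nat n + 1) / 2) = of_real \<rho> * trig k (mu n \<rho> k * (of_nat n - 1) / 2)"
    using assms(2) param_domain_sin_nonzero unfolding eigen_param_def by auto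
  moreover have "\<rho>\<^sup>2 \<noteq> 1" using assms(2,3) by (simp add: power2_eq_1_iff)
  ultimately show ?thesis
    using lam_eq_lam_formula1[OF assms(1) _ assms(5)] kms_eig_type[of k _ n \<rho>] assms(1-3) by simp
qed

section \<open>The characteristic polynomial\<close>

lemma monic_poly_eq_prod_roots:
  fixes p :: "'a::idom poly"
  assumes "degree p = n" "coeff p n = 1" "inj_on r {..<n}" "\<And>k. k < n \<Longrightarrow> poly p (r k) = 0"
  shows "p = (\<Prod>k<n. [:- r k, 1:])"
proof (rule ccontr)
  define q where "q = (\<Prod>k<n. [:- r k, 1:])"
  assume "p \<noteq> q"
  have "degree q = n \<and> coeff q n = 1" unfolding q_def lessThan_atLeast0
    by (rule degree_prod_monic) auto
  have "p - q \<noteq> 0" using \<open>p \<noteq> q\<close> by simp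
  moreover have "degree (p - q) \<le> n" "coeff (p - q) n = 0"
    using assms(1,2) \<open>degree q = n \<and> coeff q n = 1\<close> degree_diff_le[of p n q] by simp_all
  ultimately have "degree (p - q) < n"
    using leading_coeff_0_iff[of "p - q"] le_neq_implies_less by metis
  moreover have "r ` {..<n} \<subseteq> {x. poly (p - q) x = 0}"
    using assms(4) unfolding q_def by (auto simp: poly_prod)
  then have "card (r ` {..<n}) \<le> card {x. poly (p - q) x = 0}"
    using poly_roots_finite[OF \<open>p - q \<noteq> 0\<close>] by (rule card_mono[rotated])
  then have "card (r ` {..<n}) \<le> degree (p - q)"
    using card_poly_roots_bound[OF \<open>p - q \<noteq> 0\<close>] by linarith
  ultimately show False using card_image[OF assms(3)] by simp
qed

lemma all_ones_eigenvalue_0: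
  assumes "m \<ge> 2"
  shows "eigenvalue (Matrix.mat m m (\<lambda>_. 1) :: 'a::field mat) 0"
proof -
  define v :: "'a Matrix.vec" where "v = Matrix.vec m (\<lambda>i. if i = 0 then 1 else if i = 1 then -1 else 0)"
  have "vec_index v 0 \<noteq> vec_index (0\<^sub>v m) 0" using assms unfolding v_def by simp
  then have "v \<noteq> 0\<^sub>v m" by metis
  moreover have "Matrix.mat m m (\<lambda>_. 1) *\<^sub>v v = 0 \<cdot>\<^sub>v v"
  proof (rule eq_vecI)
    fix i assume "i < dim_vec (0 \<cdot>\<^sub>v v)"
    have "(\<Sum>j<m. (if j = 0 then 1 else if j = 1 then -1 else 0 :: 'a)) = 0"
      using assms by (simp add: sum.If_cases lessThan_atLeast0 Collect_conv_if)
    with \<open>i < dim_vec (0 \<cdot>\<^sub>v v)\<close> show "vec_index (Matrix.mat m m (\<lambda>_. 1) *\<^sub>v v) i = vec_index (0 \<cdot>\<^sub>v v) i"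
      unfolding v_def by (simp add: scalar_prod_def lessThan_atLeast0)
  qed (simp add: v_def)
  ultimately have "eigenvector (Matrix.mat m m (\<lambda>_. 1)) v 0"
    unfolding eigenvector_def by (simp add: v_def)
  then show ?thesis unfolding eigenvalue_def by blast
qed

text \<open>Every principal minor of the all-ones matrix is again an all-ones matrix, so the derivative
  of its characteristic polynomial is known by induction; the constant term is fixed by the
  eigenvalue \<open>0\<close>.\<close>
lemma char_poly_all_ones:
  assumes "m \<ge> 1"
  shows "char_poly (Matrix.mat m m (\<lambda>_. 1) :: 'a::field_char_0 mat) = monom 1 m - Polynomial.smult (of_nat m) (monom 1 (m - 1))"
  using assms
proof (induction m rule: nat_induct_at_least)
  case base
  have "char_poly (Matrix.mat 1 1 (\<lambda>_. 1) :: 'a mat) = (\<Prod>a\<leftarrow>diag_mat (Matrix.mat 1 1 (\<lambda>_. 1)). [:- a, 1:])"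
    by (rule char_poly_upper_triangular) (auto simp: upper_triangular_def)
  also have "\<dots> = [:-1, 1:]" by (simp add: diag_mat_def)
  finally show ?case by (simp add: monom_Suc one_pCons)
next
  case (Suc m)
  define p :: "'a poly" where "p = char_poly (Matrix.mat (Suc m) (Suc m) (\<lambda>_. 1))"
  define q :: "'a poly" where "q = monom 1 (Suc m) - Polynomial.smult (of_nat (Suc m)) (monom 1 m)"
  have "pderiv p = (\<Sum>i<Suc m. char_poly (mat_delete (Matrix.mat (Suc m) (Suc m) (\<lambda>_. 1) :: 'a mat) i i))"
    unfolding p_def by (rule pderiv_char_poly) simp
  also have "\<dots> = (\<Sum>i<Suc m. char_poly (Matrix.mat m m (\<lambda>_. 1) :: 'a mat))"
    by (intro sum.cong refl arg_cong[where f = char_poly] eq_matI) (auto simp: mat_delete_def)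
  also have "\<dots> = of_nat (Suc m) * char_poly (Matrix.mat m m (\<lambda>_. 1) :: 'a mat)"
    by (simp only: sum_constant card_lessThan)
  also have "\<dots> = Polynomial.smult (of_nat (Suc m)) (monom 1 m - Polynomial.smult (of_nat m) (monom 1 (m - 1)))"
    unfolding Suc.IH of_nat_mult_conv_smult ..
  also have "\<dots> = pderiv q"
    unfolding q_def by (simp add: pderiv_diff pderiv_smult pderiv_monom smult_diff_right smult_monom)
  finally have "pderiv (p - q) = 0" by (simp add: pderiv_diff)
  then obtain c where c: "p - q = [:c:]" using pderiv_iszero by blast
  have "poly p 0 = 0"
    using all_ones_eigenvalue_0[of "Suc m", where 'a = 'a] Suc.hyps
      eigenvalue_root_char_poly[of "Matrix.mat (Suc m) (Suc m) (\<lambda>_. 1) :: 'a mat" "Suc m"]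
    unfolding p_def by simp
  moreover have "poly q 0 = 0" unfolding q_def using Suc.hyps by (simp add: poly_monom)
  ultimately have "c = 0" using arg_cong[OF c, of "\<lambda>p. poly p 0"] by simp
  with c show ?case unfolding p_def q_def by simp
qed

lemma char_poly_KMS_0: "char_poly (map_mat complex_of_real (KMS n 0)) = [:-1, 1:] ^ n"
proof -
  have "char_poly (map_mat complex_of_real (KMS n 0)) = (\<Prod>a\<leftarrow>diag_mat (map_mat complex_of_real (KMS n 0)). [:- a, 1:])"
    by (rule char_poly_upper_triangular[OF KMS_carrier]) (auto simp: upper_triangular_def KMS_def)
  also have "diag_mat (map_mat complex_of_real (KMS n 0)) = replicate n 1"
    unfolding diag_mat_def by (rule nth_equalityI) (auto simp: KMS_def)
  finally show ?thesis by (simp add: prod_list_replicate)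
qed

lemma char_poly_KMS_1:
  assumes "n \<ge> 1"
  shows "char_poly (map_mat complex_of_real (KMS n 1)) = [:- of_nat n, 1:] * [:0, 1:] ^ (n - 1)"
proof -
  have "map_mat complex_of_real (KMS n 1) = Matrix.mat n n (\<lambda>_. 1)"
    by (rule eq_matI) (auto simp: KMS_def)
  moreover have "poly (monom 1 n - Polynomial.smult (of_nat n) (monom 1 (n - 1))) x
      = poly ([:- of_nat n, 1:] * [:0, 1:] ^ (n - 1)) x" for x :: complex
  proof -
    have "x ^ n = x * x ^ (n - 1)" using assms by (cases n) auto
    then show ?thesis by (simp add: poly_monom algebra_simps)
  qed
  then have "monom 1 n - Polynomial.smult (of_nat n) (monom 1 (n - 1)) = ([:- of_nat n, 1:] * [:0, 1:] ^ (n - 1) :: complex poly)"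
    by (intro poly_eq_poly_eq_iff[THEN iffD1] ext)
  ultimately show ?thesis using char_poly_all_ones[OF assms, where 'a = complex] by simp
qed

lemma char_poly_KMS_distinct:
  assumes "n \<ge> 2" "0 < \<rho>" "\<rho> \<noteq> 1"
  shows "char_poly (map_mat complex_of_real (KMS n \<rho>)) = (\<Prod>k<n. [:- lam n \<rho> k, 1:])"
proof (rule monic_poly_eq_prod_roots)
  let ?A = "map_mat complex_of_real (KMS n \<rho>)"
  have "\<rho>\<^sup>2 \<noteq> 1" using assms(2,3) by (simp add: power2_eq_1_iff)
  have lam: "lam_formula1_denom \<rho> (mu n \<rho> k) \<noteq> 0" "lam n \<rho> k = lam_formula1 \<rho> (mu n \<rho> k)"
    "param_domain (mu n \<rho> k)" if "k < n" for k
    using lam_eq_lam_formula1[OF assms(1) _ that] mu_eigen_param[OF assms(1) _ that] assms(2,3)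
    unfolding eigen_param_def by auto
  show "degree (char_poly ?A) = n" "coeff (char_poly ?A) n = 1"
    using degree_monic_char_poly[OF KMS_carrier] by auto
  show "inj_on (lam n \<rho>) {..<n}"
  proof (rule inj_onI)
    fix j k assume "j \<in> {..<n}" "k \<in> {..<n}" "lam n \<rho> j = lam n \<rho> k"
    with lam lam_formula1_inj[OF _ \<open>\<rho>\<^sup>2 \<noteq> 1\<close>] assms(2) have "mu n \<rho> j = mu n \<rho> k" by auto
    with mu_inj[OF assms(1) less_imp_le[OF assms(2)]] \<open>j \<in> {..<n}\<close> \<open>k \<in> {..<n}\<close> show "j = k" by auto
  qed
  show "poly (char_poly ?A) (lam n \<rho> k) = 0" if "k < n" for k
    using eigen_param_eigenvalue[OF assms(1) \<open>\<rho>\<^sup>2 \<noteq> 1\<close> mu_eigen_param[OF assms(1) _ that]] assms(2) lam(2)[OF that]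
      eigenvalue_root_char_poly[OF KMS_carrier] by simp
qed

lemma char_poly_KMS:
  assumes "n \<ge> 2" "0 \<le> \<rho>"
  shows "char_poly (map_mat complex_of_real (KMS n \<rho>)) = (\<Prod>k<n. [:- lam n \<rho> k, 1:])"
proof -
  consider "\<rho> = 0" | "\<rho> = 1" | "0 < \<rho>" "\<rho> \<noteq> 1" using assms(2) by linarith
  then show ?thesis
  proof cases
    case 1
    then have "lam n \<rho> k = 1" if "k < n" for k
      using lam_eq_lam_formula1[OF assms that] unfolding lam_formula1_def by simp
    with 1 show ?thesis using char_poly_KMS_0 by simp
  next
    case 2
    have "{..<n} = insert 0 {1..<n}" using assms(1) by auto
    then have "(\<Prod>k<n. [:- lam n 1 k, 1:]) = [:- of_nat n, 1:] * (\<Prod>k\<in>{1..<n}. [:0, 1:])"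
      using lam_at_1[OF assms(1)] assms(1) by (simp add: prod.insert)
    with 2 show ?thesis using char_poly_KMS_1[of n] assms(1) by simp
  next
    case 3
    then show ?thesis using char_poly_KMS_distinct[OF assms(1)] by simp
  qed
qed

section \<open>The first formula at the indeterminate point\<close>

lemma ct_le_cos:
  assumes "n \<ge> 2" "0 \<le> y" "y \<le> gamma n 0"
  shows "ct n y \<le> cos y"
proof -
  define b where "b = y * (real n - 1) / 2"
  have sum: "y * (real n + 1) / 2 = b + y" unfolding b_def by (simp add: field_simps)
  have "y * (real n - 1) < pi"
  proof (cases "y = 0")
    case False
    then have "y * (real n - 1) < y * (real n + 1)" using assms(2) by simp
    also have "\<dots> \<le> pi" using assms(3) unfolding gamma_def by (simp add: field_simps)
    finally show ?thesis .
  qed simp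
  then have "0 \<le> b" "b < pi / 2" using assms(1,2) unfolding b_def by simp_all
  then have "cos b > 0" "sin b \<ge> 0" by (auto intro!: cos_gt_zero_pi sin_ge_zero)
  moreover have "sin y \<ge> 0" using assms gamma_lt_pi[of n 0] by (intro sin_ge_zero) auto
  ultimately have "cos (b + y) \<le> cos b * cos y" by (simp add: cos_add)
  then show ?thesis unfolding ct_def sum b_def[symmetric] using \<open>cos b > 0\<close> by (simp add: divide_le_eq mult.commute)
qed

text \<open>\<open>\<mu>\<^sub>0(r)\<close> is squeezed to \<open>0\<close> as \<open>r \<rightarrow> 1\<close>: \<open>r = ct n m \<le> cos m\<close> for \<open>r < 1\<close> and
  \<open>r = ch n x \<ge> cosh x\<close> for \<open>r \<ge> 1\<close>.\<close>
lemma norm_mu0_le: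
  assumes "n \<ge> 2" "0 \<le> r"
  shows "norm (mu n r 0) \<le> arccos (min r 1) + arcosh (max r 1)"
proof (cases "r < 1")
  case True
  with mu_slot[OF assms, of 0] obtain m where m: "0 \<le> m" "m \<le> gamma n 0" "mu n r 0 = of_real m" "ct n m = r"
    unfolding slot_def slot_interval_def secular_def beta_def using assms(1) xi_gt_1[OF assms(1)] by auto
  then have "r \<le> cos m" using ct_le_cos[OF assms(1)] by blast
  moreover have "m \<le> pi" using m(2) gamma_lt_pi[of n 0] assms(1) by simp
  ultimately have "m \<le> arccos r" using arccos_le_arccos[of r "cos m"] assms(2) m(1) by (simp add: arccos_cos)
  with True m assms(2) show ?thesis by simp
next
  case False
  with mu_slot[OF assms, of 0] obtain x where x: "0 \<le> x" "mu n r 0 = \<i> * of_real x" "ch n x = r"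
    unfolding slot_def slot_interval_def using assms(1) by auto
  then have "cosh x \<le> r" using cosh_le_ch[OF assms(1)] by blast
  then have "x \<le> arcosh r" using x(1) arcosh_cosh_real[of x] arcosh_less_iff_real[of r "cosh x"] False
    by (metis cosh_real_ge_1 not_less)
  with False x show ?thesis by (simp add: norm_mult)
qed

lemma tendsto_mu0_at_1:
  assumes "n \<ge> 2"
  shows "((\<lambda>r. mu n r 0) \<longlongrightarrow> 0) (at 1 within {0..})"
proof (rule tendsto_0_le[where K = 1])
  have "continuous_on {0..} (\<lambda>r::real. arccos (min r 1) + arcosh (max r 1))"
    by (intro continuous_intros continuous_on_arccos continuous_on_arcosh') auto
  from continuous_on_def[THEN iffD1, OF this, rule_format, of 1]
  show "((\<lambda>r. arccos (min r 1) + arcosh (max r 1)) \<longlongrightarrow> 0) (at 1 within {0..})" by simp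
  show "\<forall>\<^sub>F r in at 1 within {0..}. norm (mu n r 0) \<le> norm (arccos (min r 1) + arcosh (max r 1)) * 1"
    using norm_mu0_le[OF assms] by (auto simp: eventually_at_filter arccos_lbound arcosh_nonneg_real)
qed

lemma isCont_lam_formula2_0: "isCont (lam_formula2 n 0) 0"
proof -
  have "((\<lambda>z::complex. sin (z * of_nat n) / sin (z * 1)) \<longlongrightarrow> of_nat n / 1) (at 0)"
    by (intro tendsto_rescaled_quotient_at_0) (auto intro!: derivative_eq_intros)
  then have "((\<lambda>z::complex. sin (z * of_nat n) / sin (z * 1)) \<longlongrightarrow> of_nat n) (at 0)" by simp
  then have "(lam_formula2 n 0 \<longlongrightarrow> of_nat n) (at 0)"
    by (rule Lim_transform_eventually) (simp add: eventually_at_filter lam_formula2_def mult.commute)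
  then show ?thesis unfolding isCont_def by (simp add: lam_formula2_def)
qed

lemma tendsto_lam_formula1_at_1:
  assumes "n \<ge> 2"
  shows "((\<lambda>r. lam_formula1 r (mu n r 0)) \<longlongrightarrow> lam n 1 0) (at 1 within {0..})"
proof -
  have "((\<lambda>r. lam_formula2 n 0 (mu n r 0)) \<longlongrightarrow> lam_formula2 n 0 0) (at 1 within {0..})"
    using isCont_tendsto_compose[OF isCont_lam_formula2_0 tendsto_mu0_at_1[OF assms]] .
  moreover have "lam_formula2 n 0 0 = lam n 1 0"
    using lam_at_1[OF assms, of 0] assms by (simp add: lam_formula2_def)
  moreover have "\<forall>\<^sub>F r in at 1 within {0..}. lam_formula2 n 0 (mu n r 0) = lam_formula1 r (mu n r 0)"
    using lam_eq_lam_formula1[OF assms, of _ 0] assms unfolding lam_def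
    by (auto simp: eventually_at_filter)
  ultimately show ?thesis using Lim_transform_eventually by fastforce
qed

theorem theorem6p5:
  fixes n :: nat and \<rho> :: real
  assumes "n \<ge> 2" and "\<rho> \<ge> 0"
  shows
    \<comment> \<open>unique roots: k = 0\<close>
    "(\<rho> \<ge> 1 \<longrightarrow> (\<exists>!x. x \<in> {0..} \<and> ch n x = \<rho>)) \<and>
     (\<rho> \<le> 1 \<longrightarrow> (\<exists>!m. m \<in> {0..gamma n 0} \<and> ct n m = \<rho>)) \<and>
     \<comment> \<open>k = 1\<close>
     (\<rho> \<ge> xi n \<longrightarrow> (\<exists>!x. x \<in> {0..} \<and> sh n x = \<rho>)) \<and>
     (1 \<le> \<rho> \<and> \<rho> \<le> xi n \<longrightarrow> (\<exists>!m. m \<in> {0..beta n 1} \<and> st n m = \<rho>)) \<and>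
     (\<rho> \<le> 1 \<longrightarrow> (\<exists>!m. m \<in> {beta n 1..gamma n 1} \<and> st n m = \<rho>)) \<and>
     \<comment> \<open>even k \<ge> 2\<close>
     (\<forall>k. 2 \<le> k \<and> k < n \<and> even k \<longrightarrow>
        (\<rho> \<ge> 1 \<longrightarrow> (\<exists>!m. m \<in> {alpha n k<..beta n k} \<and> ct n m = \<rho>)) \<and>
        (\<rho> \<le> 1 \<longrightarrow> (\<exists>!m. m \<in> {beta n k..gamma n k} \<and> ct n m = \<rho>))) \<and>
     \<comment> \<open>odd k \<ge> 3\<close>
     (\<forall>k. 3 \<le> k \<and> k < n \<and> odd k \<longrightarrow>
        (\<rho> \<ge> 1 \<longrightarrow> (\<exists>!m. m \<in> {alpha n k<..beta n k} \<and> st n m = \<rho>)) \<and>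
        (\<rho> \<le> 1 \<longrightarrow> (\<exists>!m. m \<in> {beta n k..gamma n k} \<and> st n m = \<rho>))) \<and>
     \<comment> \<open>the eigenvalues (with multiplicity) are lam_0 .. lam_{n-1}\<close>
     char_poly (map_mat complex_of_real (KMS n \<rho>)) = (\<Prod>k<n. [:- lam n \<rho> k, 1:]) \<and>
     \<comment> \<open>the alternative formula (limit in rho where indeterminate)\<close>
     (\<forall>k<n. (lam_formula1_denom \<rho> (mu n \<rho> k) \<noteq> 0 \<longrightarrow>
               lam n \<rho> k = lam_formula1 \<rho> (mu n \<rho> k)) \<and>
             (lam_formula1_denom \<rho> (mu n \<rho> k) = 0 \<longrightarrow>
               ((\<lambda>r. lam_formula1 r (mu n r k)) \<longlongrightarrow> lam n \<rho> k) (at \<rho> within {0..}))) \<and>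
     \<comment> \<open>types\<close>
     (0 < \<rho> \<and> \<rho> \<noteq> 1 \<and> \<rho> \<noteq> xi n \<longrightarrow>
        (\<forall>k<n. (odd k \<longrightarrow> eig_type1 n \<rho> (lam n \<rho> k)) \<and>
               (even k \<longrightarrow> eig_type2 n \<rho> (lam n \<rho> k))))"
proof -
  have ct_low: "\<exists>!m. m \<in> {beta n k..gamma n k} \<and> ct n m = \<rho>" if "k < n" "\<rho> \<le> 1" "even k" for k
    using secular_root_unique_low[OF assms(1) that(1) assms(2) that(2)] that(3) by (simp add: secular_def)
  have st_low: "\<exists>!m. m \<in> {beta n k..gamma n k} \<and> st n m = \<rho>" if "k < n" "\<rho> \<le> 1" "odd k" for k
    using secular_root_unique_low[OF assms(1) that(1) assms(2) that(2)] that(3) by (simp add: secular_def)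
  have ct_high: "\<exists>!m. m \<in> {alpha n k<..beta n k} \<and> ct n m = \<rho>" if "2 \<le> k" "k < n" "1 \<le> \<rho>" "even k" for k
    using secular_root_unique_high[OF assms(1) that(1-3)] that(4) by (simp add: secular_def)
  have st_high: "\<exists>!m. m \<in> {alpha n k<..beta n k} \<and> st n m = \<rho>" if "2 \<le> k" "k < n" "1 \<le> \<rho>" "odd k" for k
    using secular_root_unique_high[OF assms(1) that(1-3)] that(4) by (simp add: secular_def)
  have ct_low_0: "\<exists>!m. m \<in> {0..gamma n 0} \<and> ct n m = \<rho>" if "\<rho> \<le> 1"
    using ct_low[of 0] that assms(1) by (simp add: beta_def)
  have formula: "lam n \<rho> k = lam_formula1 \<rho> (mu n \<rho> k)" if "k < n" "lam_formula1_denom \<rho> (mu n \<rho> k) \<noteq> 0" for k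
    using lam_eq_lam_formula1[OF assms that(1)] mu_at_1[OF assms(1), of 0] that assms(1)
    by (cases "k = 0 \<and> \<rho> = 1") (auto simp: lam_formula1_denom_def)
  have limit: "((\<lambda>r. lam_formula1 r (mu n r k)) \<longlongrightarrow> lam n \<rho> k) (at \<rho> within {0..})"
    if "k < n" "lam_formula1_denom \<rho> (mu n \<rho> k) = 0" for k
    using lam_eq_lam_formula1[OF assms that(1)] tendsto_lam_formula1_at_1[OF assms(1)] that by fastforce
  show ?thesis
    using assms(1) lam_eig_type[OF assms(1)]
    by (intro conjI allI impI ch_root_unique sh_root_unique st_root_unique ct_low_0 ct_low st_low ct_high st_high
        char_poly_KMS[OF assms] formula limit) auto
qed

end
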